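(* Consider a cluster-randomized trial with i.i.d. clusters $i=1,\dots,K$, satisfying the super-population, consistency, cluster-randomization, monotonicity (standard or strong), extended principal ignorability and positivity assumptions stated in the context. Let $g$ be a principal stratum and $(a,a^* )$ a pair for which $\theta_g(a,a^* )$ is defined (see context). Then $\theta_g(a,a^* )$ is nonparametrically identified as $$ \theta_g(a,a^* )=\frac{\mathbb{E}\left[\frac{W}{N}\sum_{j=1}^{N} e_{\bullet j}(g,\bm C)\,\mu_{\bullet j}(a,d^*,\bm C)\right]}{\mathbb{E}\left[\frac{W}{N}\sum_{j=1}^{N} e_{\bullet j}(g,\bm C)\right]}, $$ where $\mu_{\bullet j}(a,d,\bm C)=\mathbb{E}[Y_{\bullet j}\mid A=a,D_{\bullet j}=d,\bm C]$, $d^*=1$ if $g=\texttt{at}$, $d^*=a^*$ if $g=\texttt{co}$, $d^*=0$ if $g=\texttt{nt}$, and the principal score $e_{\bullet j}(g,\bm C)=\mathbb{P}(G_{\bullet j}=g\mid \bm C)$ is identified by $e_{\bullet j}(\texttt{at},\bm C)=p_{\bullet j}(0,1,\bm C)$, $e_{\bullet j}(\texttt{co},\bm C)=p_{\bullet j}(1,1,\bm C)-p_{\bullet j}(0,1,\bm C)$, $e_{\bullet j}(\texttt{nt},\bm C)=p_{\bullet j}(1,0,\bm C)$, with $p_{\bullet j}(a,d,\bm C)=\mathbb{P}(D_{\bullet j}=d\mid A=a,\bm C)$.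
   Context: Data: each cluster $i$ has a random size $N_i$, cluster-level covariates $\bm V_i$, individual covariates $\bm X_i=(\bm X_{i1},\dots,\bm X_{iN_i})$, a cluster-level treatment assignment $A_i\in\{0,1\}$, individual treatment uptake $D_{ij}\in\{0,1\}$ and outcome $Y_{ij}\in\mathbb{R}$, $j=1,\dots,N_i$; $\bm D_i=(D_{i1},\dots,D_{iN_i})$ and $\bm D_{i(-j)}$ is $\bm D_i$ with the $j$-th entry removed; $\bm C_i=(\bm X_i,\bm V_i,N_i)$. Potential variables: $D_{ij}(a)$ is the uptake if the cluster is assigned $a$; $Y_{ij}(a,\bm d_i)=Y_{ij}(a,d_{ij},\bm d_{i(-j)})$ is the outcome if the cluster is assigned $a$ and uptakes of the cluster are set to $\bm d_i\in\{0,1\}^{N_i}$; $Y_{ij}(a)=Y_{ij}(a,D_{ij}(a),\bm D_{i(-j)}(a))$ (no cross-cluster interference). Let $\mathcal U_i$ collect $\bm V_i,\bm X_i,\bm D_i(1),\bm D_i(0)$ and all $\bm Y_i(a,\bm d_i)$. Principal stratum $G_{ij}=(D_{ij}(1),D_{ij}(0))$: $\texttt{at}=(1,1)$, $\texttt{co}=(1,0)$, $\texttt{nt}=(0,0)$, $\texttt{de}=(0,1)$. A subscript $\bullet$ and omission of $i$ denote a generic cluster; expectations are over the super population. $W$ is a user-specified cluster weight that is a known function of $N$ and $\bm V$ (e.g. $W=1$ or $W=N$). Estimand: $\theta_g(a,a^* )=\mathbb{E}\big[\frac{W}{N}\sum_{j=1}^N \mathbb{I}(G_{\bullet j}=g)Y_{\bullet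 j}(a,D_{\bullet j}(a^* ),\bm D_{\bullet(-j)}(a))\big]/\mathbb{E}\big[\frac{W}{N}\sum_{j=1}^N \mathbb{I}(G_{\bullet j}=g)\big]$, defined for $g\in\{\texttt{at},\texttt{co},\texttt{nt}\}$ under standard monotonicity or $g\in\{\texttt{co},\texttt{nt}\}$ under strong monotonicity, with $(a,a^* )\in\{(1,1),(1,0),(0,0)\}$ if $g=\texttt{co}$ and $(a,a^* )\in\{(1,0),(0,0)\}$ if $g\in\{\texttt{at},\texttt{nt}\}$. Assumptions: (Super population) $N_i$ has an unknown distribution with finite support in the positive integers; given $N_i$, $(\mathcal U_i,A_i)$ has joint law $\mathbb{P}_{\mathcal U_i\mid N_i}\times\mathbb{P}_{A_i}$, with $\mathbb{P}_{\mathcal U_i\mid N_i}$ having finite second moments; clusters are i.i.d. (Consistency) If $A_i=a$ then $Y_{ij}(a)=Y_{ij}$ and $D_{ij}(a)=D_{ij}$; if $A_i=a$ and $\bm D_i=\bm d_i$ then $Y_{ij}(a,\bm d_i)=Y_{ij}$. (Cluster randomization) $A_1,\dots,A_K$ are i.i.d. Bernoulli$(\pi)$ with known $\pi\in(0,1)$, independent of all potential variables and covariates. (Monotonicity) either (a) standard: $D_{ij}(1)\ge D_{ij}(0)$, or (b) strong: $D_{ij}(0)=0$. (Extended principal ignorability) for all $a,a^*\in\{0,1\}$, $Y_{ij}(a,D_{ij}(a^* ),\bm D_{i(-j)}(a))\perp G_{ij}\mid \bm C_i$. (Positivity) $\mathbb{P}(D_{ij}=d\mid A_i=1,\bm C_i)>0$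 for $d\in\{0,1\}$ and $\mathbb{P}(D_{ij}=0\mid A_i=0,\bm C_i)>0$; under standard monotonicity additionally $0<\mathbb{P}(D_{ij}=1\mid A_i=0,\bm C_i)<1$. *)

theory Defs
  imports "HOL-Probability.Probability"
begin

datatype stratum = At | Co | Nt | De

definition stratum_of :: "bool \<Rightarrow> bool \<Rightarrow> stratum" where
  "stratum_of d1 d0 = (if d1 then (if d0 then At else Co) else (if d0 then De else Nt))"

definition cond_indep ::
  "'w measure \<Rightarrow> 'w measure \<Rightarrow> ('w \<Rightarrow> 'b) \<Rightarrow> 'b measure \<Rightarrow> ('w \<Rightarrow> 'c) \<Rightarrow> 'c measure \<Rightarrow> bool" where
  "cond_indep M F X MX Z MZ \<longleftrightarrow>
     (\<forall>B\<in>sets MX. \<forall>E\<in>sets MZ.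
        AE \<omega> in M.
          real_cond_exp M F (\<lambda>\<omega>. (if X \<omega> \<in> B then 1 else 0) * (if Z \<omega> \<in> E then 1 else 0)) \<omega>
          = real_cond_exp M F (\<lambda>\<omega>. if X \<omega> \<in> B then 1 else 0) \<omega>
            * real_cond_exp M F (\<lambda>\<omega>. if Z \<omega> \<in> E then 1 else 0) \<omega>)"

text \<open>Independence of two random variables with possibly different value types
  (the library's indep_var requires equal types; this is its characterisation indep_var_eq).\<close>
definition indep_rv :: "'w measure \<Rightarrow> 'b measure \<Rightarrow> ('w \<Rightarrow> 'b) \<Rightarrow> 'c measure \<Rightarrow> ('w \<Rightarrow> 'c) \<Rightarrow> bool" where
  "indep_rv M MX X MY Y \<longleftrightarrow>
     X \<in> measurable M MX \<and> Y \<in> measurable M MY \<and>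
     prob_space.indep_set M
       (sigma_sets (space M) {X -` S \<inter> space M | S. S \<in> sets MX})
       (sigma_sets (space M) {Y -` S \<inter> space M | S. S \<in> sets MY})"

text \<open>Admissible (stratum, a, a*) triples for which theta_g(a,a*) is defined;
  strong = True means strong monotonicity, False standard monotonicity.\<close>
definition admissible :: "bool \<Rightarrow> stratum \<Rightarrow> bool \<Rightarrow> bool \<Rightarrow> bool" where
  "admissible strong g a astar \<longleftrightarrow>
     (g \<in> (if strong then {Co, Nt} else {At, Co, Nt})) \<and>
     (if g = Co then (a, astar) \<in> {(True, True), (True, False), (False, False)}
      else (a, astar) \<in> {(True, False), (False, False)})"

definition dstar :: "stratum \<Rightarrow> bool \<Rightarrow> bool" where
  "dstar g astar = (case g of At \<Rightarrow> True | Co \<Rightarrow> astar | Nt \<Rightarrow> False | De \<Rightarrow> False)"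

text \<open>Identified principal score, with p a j c a version of P(D_j = 1 | A = a, C = c),
  so that p_j(a,1,c) = p a j c and p_j(a,0,c) = 1 - p a j c.\<close>
definition escore :: "(bool \<Rightarrow> nat \<Rightarrow> 'c \<Rightarrow> real) \<Rightarrow> stratum \<Rightarrow> nat \<Rightarrow> 'c \<Rightarrow> real" where
  "escore p g j c = (case g of
       At \<Rightarrow> p False j c
     | Co \<Rightarrow> p True j c - p False j c
     | Nt \<Rightarrow> 1 - p True j c
     | De \<Rightarrow> 0)"

text \<open>Counterfactual outcome Y_j(a, D_j(a*), D_(-j)(a)) in a cluster of size n;
  Dp w a k is the potential uptake D_k(a), Yp w a j ds is Y_j(a, ds) for ds of length n.\<close>
definition cf_outcome ::
  "('w \<Rightarrow> bool \<Rightarrow> nat \<Rightarrow> bool) \<Rightarrow> ('w \<Rightarrow> bool \<Rightarrow> nat \<Rightarrow> bool list \<Rightarrow> real) \<Rightarrow> nat \<Rightarrow> bool \<Rightarrow> bool \<Rightarrow> 'w \<Rightarrow> nat \<Rightarrow> real" where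
  "cf_outcome Dp Yp n a astar \<omega> j = Yp \<omega> a j (map (\<lambda>k. if k = j then Dp \<omega> astar k else Dp \<omega> a k) [0..<n])"

end

theory Submission
  imports Defs
begin

(* Under monotonicity each stratum indicator 1{G_j = g} is an affine
   combination of D_j(1) and D_j(0), and randomization (A independent of the covariates and all
   potential variables, both arms of positive probability) identifies P(D_j(a) = 1 | C) with
   p(a, j, C); this gives the principal scores. For the outcomes, principal ignorability factorizes
   E[Y_j(a) 1{D_j(a) = d} | C] = E[Y_j(a) | C] P(D_j(a) = d | C), while randomization and
   consistency identify the left-hand side with mu(a, d, j, C) P(D_j(a) = d | C); hence
   E[Y_j(a) | C] = mu(a, d, j, C) wherever that probability is positive. The cross-world outcome
   Y_j(1, D_j(0), D_-j(1)) agrees with Y_j(1) on never-takers, so by ignorability it has the same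
   conditional mean. A last use of ignorability gives
   E[1{G_j = g} Y_j(a, D_j(astar), D_-j(a)) | C] = e_j(g, C) mu(a, d, j, C), and since the weight
   W/N is a function of C, the weighted cluster sums of both sides have equal expectations. *)

section \<open>Vimage algebras, independence and conditional expectation\<close>

lemma sets_vimage_algebra_subset:
  assumes "f \<in> measurable N M" "space N = X"
  shows "sets (vimage_algebra X f M) \<subseteq> sets N"
proof -
  have "f \<in> X \<rightarrow> space M" using measurable_space[OF assms(1)] assms(2) by blast
  then show ?thesis
    using measurable_sets[OF assms(1)] assms(2) by (auto simp: sets_vimage_algebra2)
qed

lemma subalgebra_vimage_algebra:
  assumes "f \<in> measurable M N"
  shows "subalgebra M (vimage_algebra (space M) f N)"
  using sets_vimage_algebra_subset[OF assms refl] by (simp add: subalgebra_def)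

lemma measurable_vimage_algebra_self:
  assumes "f \<in> measurable M N"
  shows "f \<in> measurable (vimage_algebra (space M) f N) N"
  using measurable_space[OF assms] by (intro measurable_vimage_algebra1) blast

lemma (in prob_space) sigma_finite_subalgebra_vimage_algebra:
  assumes "f \<in> measurable M N"
  shows "sigma_finite_subalgebra M (vimage_algebra (space M) f N)"
  by (rule finite_measure_subalgebra_is_sigma_finite)
     (use subalgebra_vimage_algebra[OF assms] finite_measure_axioms
      in \<open>auto simp: finite_measure_subalgebra_def finite_measure_subalgebra_axioms_def\<close>)

lemma sigma_sets_preimages_subset_vimage_algebra:
  assumes "h \<in> measurable (vimage_algebra (space M) T MT) N" "T \<in> space M \<rightarrow> space MT"
  shows "sigma_sets (space M) {h -` B \<inter> space M | B. B \<in> sets N}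
           \<subseteq> sigma_sets (space M) {T -` S \<inter> space M | S. S \<in> sets MT}"
proof (rule sigma_sets_mono')
  show "{h -` B \<inter> space M | B. B \<in> sets N} \<subseteq> {T -` S \<inter> space M | S. S \<in> sets MT}"
    using measurable_sets[OF assms(1)] sets_vimage_algebra2[OF assms(2)] by auto
qed

lemma (in prob_space) indep_rv_indep_var:
  assumes "indep_rv M MA A MT T"
    and "f \<in> borel_measurable (vimage_algebra (space M) A MA)"
    and "h \<in> borel_measurable (vimage_algebra (space M) T MT)"
  shows "indep_var borel f borel h"
proof -
  have A: "A \<in> measurable M MA" and T: "T \<in> measurable M MT"
    and indep: "indep_set (sigma_sets (space M) {A -` S \<inter> space M | S. S \<in> sets MA})
                          (sigma_sets (space M) {T -` S \<inter> space M | S. S \<in> sets MT})"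
    using assms(1) unfolding indep_rv_def by auto
  show ?thesis
    unfolding indep_var_eq
  proof (intro conjI)
    show "random_variable borel f" "random_variable borel h"
      using measurable_from_subalg[OF subalgebra_vimage_algebra[OF A] assms(2)]
        measurable_from_subalg[OF subalgebra_vimage_algebra[OF T] assms(3)] by auto
    show "indep_set (sigma_sets (space M) {f -` B \<inter> space M | B. B \<in> sets borel})
                    (sigma_sets (space M) {h -` B \<inter> space M | B. B \<in> sets borel})"
      using indep sigma_sets_preimages_subset_vimage_algebra[OF assms(2)]
        sigma_sets_preimages_subset_vimage_algebra[OF assms(3)]
        measurable_space[OF A] measurable_space[OF T]
      unfolding indep_sets2_eq by blast
  qed
qed

lemma (in prob_space) indep_rv_integral_indicator_mult:
  assumes "indep_rv M (count_space UNIV) A MT T"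
    and "h \<in> borel_measurable (vimage_algebra (space M) T MT)" and "integrable M h"
  shows "(\<integral>\<omega>. indicator {\<omega>\<in>space M. A \<omega> = a} \<omega> * h \<omega> \<partial>M)
         = prob {\<omega>\<in>space M. A \<omega> = a} * (\<integral>\<omega>. h \<omega> \<partial>M)"
proof -
  let ?X = "indicator {\<omega>\<in>space M. A \<omega> = a} :: 'a \<Rightarrow> real"
  have A: "A \<in> measurable M (count_space UNIV)" using assms(1) unfolding indep_rv_def by blast
  have "(\<lambda>\<omega>. indicator {a} (A \<omega>) :: real)
          \<in> borel_measurable (vimage_algebra (space M) A (count_space UNIV))"
    using measurable_vimage_algebra_self[OF A] by (rule measurable_compose) simp
  then have "?X \<in> borel_measurable (vimage_algebra (space M) A (count_space UNIV))"
    by (rule measurable_cong[THEN iffD1, rotated]) (auto simp: indicator_def)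
  then have "indep_var borel ?X borel h"
    using assms(1,2) by (intro indep_rv_indep_var)
  moreover have "integrable M ?X"
    using A by (intro integrable_real_indicator) (auto simp: emeasure_eq_measure)
  ultimately have "(\<integral>\<omega>. ?X \<omega> * h \<omega> \<partial>M) = (\<integral>\<omega>. ?X \<omega> \<partial>M) * (\<integral>\<omega>. h \<omega> \<partial>M)"
    using assms(3) by (rule indep_var_lebesgue_integral)
  then show ?thesis using A by simp
qed

lemma (in prob_space) indep_rv_AE_of_AE_on_event:
  assumes indep: "indep_rv M (count_space UNIV) A MT T"
    and P: "{\<omega>\<in>space M. P \<omega>} \<in> sets (vimage_algebra (space M) T MT)"
    and pos: "prob {\<omega>\<in>space M. A \<omega> = a} > 0"
    and AE: "AE \<omega> in M. A \<omega> = a \<longrightarrow> P \<omega>"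
  shows "AE \<omega> in M. P \<omega>"
proof -
  let ?Q = "space M - {\<omega>\<in>space M. P \<omega>}"
  have T: "T \<in> measurable M MT" using indep unfolding indep_rv_def by blast
  have Q: "?Q \<in> sets (vimage_algebra (space M) T MT)"
    using sets.compl_sets[OF P] by simp
  then have "?Q \<in> events"
    using subalgebra_vimage_algebra[OF T] unfolding subalgebra_def by auto
  have "prob {\<omega>\<in>space M. A \<omega> = a} * (\<integral>\<omega>. indicator ?Q \<omega> \<partial>M)
      = (\<integral>\<omega>. indicator {\<omega>\<in>space M. A \<omega> = a} \<omega> * indicator ?Q \<omega> \<partial>M)"
    using Q \<open>?Q \<in> events\<close>
    by (intro indep_rv_integral_indicator_mult[OF indep, symmetric])
       (auto intro!: integrable_real_indicator simp: emeasure_eq_measure)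
  also have "\<dots> = 0"
    by (rule integral_eq_zero_AE) (use AE in \<open>eventually_elim, auto simp: indicator_def\<close>)
  finally have "prob ?Q = 0" using pos \<open>?Q \<in> events\<close> by simp
  then have "AE \<omega> in M. \<omega> \<notin> ?Q" using prob_eq_0[OF \<open>?Q \<in> events\<close>] by simp
  then show ?thesis using AE_space by eventually_elim auto
qed

lemma (in prob_space) real_cond_exp_unit_interval:
  assumes "sigma_finite_subalgebra M F" "f \<in> borel_measurable M"
    and "AE x in M. 0 \<le> f x \<and> f x \<le> 1"
  shows "AE x in M. 0 \<le> real_cond_exp M F f x \<and> real_cond_exp M F f x \<le> 1"
proof -
  interpret sigma_finite_subalgebra M F by fact
  have f: "integrable M f"
    by (rule integrable_const_bound[where B=1]) (use assms in auto)
  have "AE x in M. 0 \<le> real_cond_exp M F f x"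
    by (rule real_cond_exp_ge_c[OF f]) (use assms in auto)
  moreover have "AE x in M. real_cond_exp M F f x \<le> 1"
    by (rule real_cond_exp_le_c[OF f]) (use assms in auto)
  ultimately show ?thesis by eventually_elim auto
qed

lemma integrable_mult_abs_le_1:
  fixes g k :: "'a \<Rightarrow> real"
  assumes "integrable M g" "k \<in> borel_measurable M" "AE x in M. \<bar>k x\<bar> \<le> 1"
  shows "integrable M (\<lambda>x. k x * g x)"
proof (rule Bochner_Integration.integrable_bound[OF assms(1)])
  show "AE x in M. norm (k x * g x) \<le> norm (g x)"
    using assms(3) by eventually_elim (auto simp: abs_mult intro!: mult_left_le_one_le)
qed (use assms in measurable)

lemma (in prob_space) cond_indep_integral_indicator_eq:
  fixes X :: "'a \<Rightarrow> real"
  assumes sf: "sigma_finite_subalgebra M F"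
    and ci: "cond_indep M F X borel Z MZ"
    and [measurable]: "X \<in> borel_measurable M" "Z \<in> measurable M MZ" "E \<in> sets MZ" "B \<in> sets borel"
    and G: "G \<in> sets F"
  defines "z \<equiv> \<lambda>\<omega>. if Z \<omega> \<in> E then 1 else 0 :: real"
    and "XB \<equiv> \<lambda>\<omega>. if X \<omega> \<in> B then 1 else 0 :: real"
  shows "(\<integral>\<omega>. indicator G \<omega> * real_cond_exp M F z \<omega> * XB \<omega> \<partial>M)
       = (\<integral>\<omega>. indicator G \<omega> * (XB \<omega> * z \<omega>) \<partial>M)"
proof -
  interpret sigma_finite_subalgebra M F by fact
  have [measurable]: "G \<in> sets M" "z \<in> borel_measurable M" "XB \<in> borel_measurable M"
    using G subalg unfolding subalgebra_def z_def XB_def by auto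
  have "(\<integral>\<omega>. indicator G \<omega> * real_cond_exp M F z \<omega> * XB \<omega> \<partial>M)
      = (\<integral>\<omega>. (indicator G \<omega> * real_cond_exp M F z \<omega>) * real_cond_exp M F XB \<omega> \<partial>M)"
  proof (rule real_cond_exp_intg(2)[symmetric])
    have "AE \<omega> in M. \<bar>indicator G \<omega> * real_cond_exp M F z \<omega>\<bar> \<le> 1"
      using real_cond_exp_unit_interval[OF sf, of z]
      by (auto simp: z_def indicator_def elim!: AE_mp)
    then show "integrable M (\<lambda>\<omega>. indicator G \<omega> * real_cond_exp M F z \<omega> * XB \<omega>)"
      by (intro integrable_mult_abs_le_1) (auto intro!: integrable_const_bound[where B=1] simp: XB_def)
  qed (use G in auto)
  also have "\<dots> = (\<integral>\<omega>. indicator G \<omega> * real_cond_exp M F (\<lambda>\<omega>. XB \<omega> * z \<omega>) \<omega> \<partial>M)"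
  proof (rule integral_cong_AE)
    have "AE \<omega> in M. real_cond_exp M F (\<lambda>\<omega>. XB \<omega> * z \<omega>) \<omega>
                   = real_cond_exp M F XB \<omega> * real_cond_exp M F z \<omega>"
      using ci unfolding cond_indep_def z_def XB_def by auto
    then show "AE \<omega> in M. indicator G \<omega> * real_cond_exp M F z \<omega> * real_cond_exp M F XB \<omega>
                        = indicator G \<omega> * real_cond_exp M F (\<lambda>\<omega>. XB \<omega> * z \<omega>) \<omega>"
      by eventually_elim simp
  qed auto
  also have "\<dots> = (\<integral>\<omega>. indicator G \<omega> * (XB \<omega> * z \<omega>) \<partial>M)"
    by (rule real_cond_exp_intg(2))
       (use G in \<open>auto intro!: integrable_const_bound[where B=1] simp: indicator_def XB_def z_def\<close>)
  finally show ?thesis .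
qed

(* The definition of cond_indep only speaks about indicators of X; integrable induction over
   the law of X extends the factorization to integrable functions of X. *)
lemma (in prob_space) cond_indep_integral_eq:
  fixes X :: "'a \<Rightarrow> real" and f :: "real \<Rightarrow> real"
  assumes sf: "sigma_finite_subalgebra M F"
    and ci: "cond_indep M F X borel Z MZ"
    and X: "X \<in> borel_measurable M" and Z: "Z \<in> measurable M MZ" and E: "E \<in> sets MZ"
    and G: "G \<in> sets F"
    and f: "integrable (distr M borel X) f"
  defines "z \<equiv> \<lambda>\<omega>. if Z \<omega> \<in> E then 1 else 0 :: real"
  shows "(\<integral>\<omega>. indicator G \<omega> * real_cond_exp M F z \<omega> * f (X \<omega>) \<partial>M)
       = (\<integral>\<omega>. indicator G \<omega> * (f (X \<omega>) * z \<omega>) \<partial>M)"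
  using f
proof (induct rule: integrable_induct)
  interpret sigma_finite_subalgebra M F by fact
  define q where "q = real_cond_exp M F z"
  note X[measurable] Z[measurable] E[measurable]
  have [measurable]: "G \<in> sets M" using G subalg by (auto simp: subalgebra_def)
  have z[measurable]: "z \<in> borel_measurable M" unfolding z_def by measurable
  have q: "AE x in M. 0 \<le> q x \<and> q x \<le> 1"
    unfolding q_def by (rule real_cond_exp_unit_interval[OF sf z]) (auto simp: z_def)
  have integrable_q: "integrable M (\<lambda>\<omega>. indicator G \<omega> * q \<omega> * g \<omega>)"
    if "integrable M g" for g :: "'a \<Rightarrow> real"
    using q by (intro integrable_mult_abs_le_1[OF that]) (auto simp: q_def indicator_def elim!: AE_mp)
  have integrable_z: "integrable M (\<lambda>\<omega>. indicator G \<omega> * (g \<omega> * z \<omega>))"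
    if "integrable M g" for g :: "'a \<Rightarrow> real"
    using integrable_mult_abs_le_1[OF that, of "\<lambda>\<omega>. indicator G \<omega> * z \<omega>"]
    by (auto simp: indicator_def z_def mult_ac)
  have integrable_comp: "integrable M (\<lambda>\<omega>. h (X \<omega>))" "h \<in> borel_measurable borel"
    if "integrable (distr M borel X) h" for h :: "real \<Rightarrow> real"
  proof -
    show "h \<in> borel_measurable borel"
      using borel_measurable_integrable[OF that] by (simp cong: measurable_cong_sets)
    then show "integrable M (\<lambda>\<omega>. h (X \<omega>))" using that integrable_distr_eq[OF X] by blast
  qed
  {
    case (base B c)
    then have "B \<in> sets borel" by simp
    from cond_indep_integral_indicator_eq[OF sf ci X Z E this G] show ?case
      by (simp add: z_def indicator_def[of B] of_bool_def mult_ac integral_mult_right_zero)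
  }
  {
    case (add f g)
    have f: "integrable M (\<lambda>\<omega>. f (X \<omega>))" and g: "integrable M (\<lambda>\<omega>. g (X \<omega>))"
      using add integrable_comp by auto
    show ?case
      using add(2,4) integrable_q[OF f] integrable_q[OF g] integrable_z[OF f] integrable_z[OF g]
      by (simp add: q_def distrib_left distrib_right)
  }
  {
    case (lim f s)
    have [measurable]: "f \<in> borel_measurable borel" "\<And>i. s i \<in> borel_measurable borel"
      using lim(1,5) integrable_comp by auto
    have bound: "integrable M (\<lambda>\<omega>. 2 * norm (f (X \<omega>)))" using lim(5) integrable_comp by auto
    have "(\<lambda>i. \<integral>\<omega>. indicator G \<omega> * q \<omega> * s i (X \<omega>) \<partial>M)
        \<longlonglongrightarrow> (\<integral>\<omega>. indicator G \<omega> * q \<omega> * f (X \<omega>) \<partial>M)"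
    proof (rule integral_dominated_convergence[OF _ _ bound])
      show "AE x in M. (\<lambda>i. indicator G x * q x * s i (X x)) \<longlonglongrightarrow> indicator G x * q x * f (X x)"
        using lim(3) by (auto intro!: tendsto_mult_left)
      show "AE x in M. norm (indicator G x * q x * s i (X x)) \<le> 2 * norm (f (X x))" for i
        using q
      proof eventually_elim
        case (elim x)
        then have "norm (indicator G x * q x * s i (X x)) \<le> norm (s i (X x))"
          by (auto simp: indicator_def abs_mult intro!: mult_left_le_one_le)
        then show ?case using lim(4)[of "X x" i] by simp
      qed
    qed (auto simp: q_def)
    moreover have "(\<lambda>i. \<integral>\<omega>. indicator G \<omega> * (s i (X \<omega>) * z \<omega>) \<partial>M)
        \<longlonglongrightarrow> (\<integral>\<omega>. indicator G \<omega> * (f (X \<omega>) * z \<omega>) \<partial>M)"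
    proof (rule integral_dominated_convergence[OF _ _ bound])
      show "AE x in M. (\<lambda>i. indicator G x * (s i (X x) * z x)) \<longlonglongrightarrow> indicator G x * (f (X x) * z x)"
        using lim(3) by (auto intro!: tendsto_mult_left tendsto_mult_right)
      show "AE x in M. norm (indicator G x * (s i (X x) * z x)) \<le> 2 * norm (f (X x))" for i
        using lim(4)[of "X _" i] by (auto simp: indicator_def z_def)
    qed auto
    ultimately show ?case
      using lim(2) by (simp add: q_def LIMSEQ_unique)
  }
qed

lemma (in prob_space) cond_indep_real_cond_exp_mult:
  fixes X :: "'a \<Rightarrow> real"
  assumes sf: "sigma_finite_subalgebra M F"
    and ci: "cond_indep M F X borel Z MZ"
    and X: "X \<in> borel_measurable M" "integrable M X"
    and Z: "Z \<in> measurable M MZ" and E: "E \<in> sets MZ"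
  defines "z \<equiv> \<lambda>\<omega>. if Z \<omega> \<in> E then 1 else 0 :: real"
  shows "AE \<omega> in M. real_cond_exp M F (\<lambda>\<omega>. X \<omega> * z \<omega>) \<omega>
           = real_cond_exp M F X \<omega> * real_cond_exp M F z \<omega>"
proof -
  interpret sigma_finite_subalgebra M F by fact
  define q where "q = real_cond_exp M F z"
  note X(1)[measurable] Z[measurable] E[measurable]
  have z[measurable]: "z \<in> borel_measurable M" unfolding z_def by measurable
  have q: "AE x in M. 0 \<le> q x \<and> q x \<le> 1"
    unfolding q_def by (rule real_cond_exp_unit_interval[OF sf z]) (auto simp: z_def)
  have "integrable (distr M borel X) (\<lambda>x. x)"
    using X by (subst integrable_distr_eq) auto
  note integral_eq = cond_indep_integral_eq[OF sf ci X(1) Z E _ this]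
  show ?thesis
    unfolding q_def[symmetric]
  proof (rule real_cond_exp_charact)
    fix G assume G: "G \<in> sets F"
    have [measurable]: "G \<in> sets M" using G subalg by (auto simp: subalgebra_def)
    have "integrable M (\<lambda>\<omega>. (indicator G \<omega> * q \<omega>) * X \<omega>)"
      using q by (intro integrable_mult_abs_le_1[OF X(2)]) (auto simp: q_def indicator_def elim!: AE_mp)
    then have "(\<integral>\<omega>. (indicator G \<omega> * q \<omega>) * real_cond_exp M F X \<omega> \<partial>M)
             = (\<integral>\<omega>. (indicator G \<omega> * q \<omega>) * X \<omega> \<partial>M)"
      by (rule real_cond_exp_intg(2)) (use G in \<open>auto simp: q_def\<close>)
    then show "(\<integral>\<omega>\<in>G. X \<omega> * z \<omega> \<partial>M) = (\<integral>\<omega>\<in>G. real_cond_exp M F X \<omega> * q \<omega> \<partial>M)"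
      using integral_eq[OF G] by (simp add: set_lebesgue_integral_def z_def q_def mult_ac)
  next
    show "integrable M (\<lambda>\<omega>. X \<omega> * z \<omega>)"
      by (rule Bochner_Integration.integrable_bound[OF X(2)]) (auto simp: z_def)
    show "integrable M (\<lambda>\<omega>. real_cond_exp M F X \<omega> * q \<omega>)"
    proof -
      have "AE \<omega> in M. \<bar>q \<omega>\<bar> \<le> 1" using q by eventually_elim auto
      then show ?thesis
        using integrable_mult_abs_le_1[OF real_cond_exp_int(1)[OF X(2)], of q]
        by (simp add: q_def mult.commute)
    qed
  qed (auto simp: q_def)
qed

lemma (in sigma_finite_subalgebra) AE_eq_of_set_integrals_eq:
  fixes f g :: "'a \<Rightarrow> real"
  assumes "f \<in> borel_measurable F" "g \<in> borel_measurable F" "integrable M f" "integrable M g"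
    and "\<And>H. H \<in> sets F \<Longrightarrow> (\<integral>\<omega>. indicator H \<omega> * f \<omega> \<partial>M) = (\<integral>\<omega>. indicator H \<omega> * g \<omega> \<partial>M)"
  shows "AE \<omega> in M. f \<omega> = g \<omega>"
proof -
  have "AE \<omega> in M. real_cond_exp M F f \<omega> = f \<omega>"
    using assms(1,3) by (rule real_cond_exp_F_meas[rotated])
  moreover have "AE \<omega> in M. real_cond_exp M F f \<omega> = g \<omega>"
    by (rule real_cond_exp_charact) (use assms in \<open>auto simp: set_lebesgue_integral_def\<close>)
  ultimately show ?thesis by eventually_elim simp
qed

lemma (in prob_space) prob_eq_pos_of_bernoulli:
  assumes "A \<in> measurable M (count_space UNIV)" "prob {\<omega>\<in>space M. A \<omega>} = \<pi>" "0 < \<pi>" "\<pi> < 1"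
  shows "0 < prob {\<omega>\<in>space M. A \<omega> = a}"
proof (cases a)
  case False
  have "{\<omega>\<in>space M. A \<omega>} \<in> events" using assms(1) by measurable
  then have "prob (space M - {\<omega>\<in>space M. A \<omega>}) = 1 - \<pi>" using assms(2) by (simp add: prob_compl)
  moreover have "{\<omega>\<in>space M. A \<omega> = a} = space M - {\<omega>\<in>space M. A \<omega>}" using False by auto
  ultimately show ?thesis using assms(4) by simp
qed (use assms in simp)

lemma integrable_abs_le_mult_of_squares:
  fixes f g h :: "'a \<Rightarrow> real"
  assumes "integrable M (\<lambda>x. (f x)\<^sup>2)" "integrable M (\<lambda>x. (g x)\<^sup>2)" "h \<in> borel_measurable M"
    and "AE x in M. \<bar>h x\<bar> \<le> \<bar>f x * g x\<bar>"
  shows "integrable M h"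
proof (rule Bochner_Integration.integrable_bound[OF _ assms(3)])
  show "integrable M (\<lambda>x. (f x)\<^sup>2 + (g x)\<^sup>2)" using assms(1,2) by simp
  show "AE x in M. norm (h x) \<le> norm ((f x)\<^sup>2 + (g x)\<^sup>2)"
    using assms(4)
  proof eventually_elim
    case (elim x)
    have "2 * \<bar>f x\<bar> * \<bar>g x\<bar> \<le> \<bar>f x\<bar>\<^sup>2 + \<bar>g x\<bar>\<^sup>2" by (rule sum_squares_bound)
    then show ?case using elim abs_ge_zero[of "f x * g x"] by (simp add: abs_mult)
  qed
qed

lemma map_upt_eq_iff:
  "map f [0..<n] = ds \<longleftrightarrow> n = length ds \<and> (\<forall>k\<in>{..<length ds}. f k = ds ! k)"
  by (auto simp: list_eq_iff_nth_eq)

lemma measurable_cf_outcome: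
  assumes [measurable]: "\<And>a k. (\<lambda>\<omega>. Dp \<omega> a k) \<in> measurable S (count_space UNIV)"
    and Yp: "\<And>a j ds. (\<lambda>\<omega>. Yp \<omega> a j ds) \<in> borel_measurable S"
    and [measurable]: "N \<in> measurable S (count_space UNIV)"
  shows "(\<lambda>\<omega>. cf_outcome Dp Yp (N \<omega>) a b \<omega> j) \<in> borel_measurable S"
proof -
  let ?L = "\<lambda>\<omega>. map (\<lambda>k. if k = j then Dp \<omega> b k else Dp \<omega> a k) [0..<N \<omega>]"
  have "?L \<in> measurable S (count_space UNIV)"
    unfolding measurable_count_space_eq2_countable
  proof (intro conjI ballI)
    fix ds :: "bool list"
    have "?L -` {ds} \<inter> space S = {\<omega> \<in> space S. N \<omega> = length ds \<and>
            (\<forall>k\<in>{..<length ds}. Dp \<omega> (if k = j then b else a) k = ds ! k)}"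
      by (auto simp: map_upt_eq_iff if_distrib[of "\<lambda>c. Dp _ c _"])
    also have "\<dots> \<in> sets S"
      by (intro sets.sets_Collect_conj sets.sets_Collect_countable_All') measurable
    finally show "?L -` {ds} \<inter> space S \<in> sets S" .
  qed simp
  then show ?thesis
    unfolding cf_outcome_def by (rule measurable_compose_countable[rotated]) (rule Yp)
qed

definition uptake_prob :: "(bool \<Rightarrow> nat \<Rightarrow> 'c \<Rightarrow> real) \<Rightarrow> bool \<Rightarrow> bool \<Rightarrow> nat \<Rightarrow> 'c \<Rightarrow> real" where
  "uptake_prob p a d j c = (if d then p a j c else 1 - p a j c)"

definition stratum_uptake :: "bool \<Rightarrow> stratum \<Rightarrow> bool" where
  "stratum_uptake a s = (if a then s \<in> {At, Co} else s \<in> {At, De})"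

lemma stratum_uptake_stratum_of[simp]: "stratum_uptake a (stratum_of d1 d0) = (if a then d1 else d0)"
  by (cases a) (auto simp: stratum_uptake_def stratum_of_def)

lemma admissible_uptake_prob_pos:
  assumes "admissible strong g a astar"
    and "0 < p True j c" "p True j c < 1" "p False j c < 1" "\<not> strong \<longrightarrow> 0 < p False j c"
  shows "0 < uptake_prob p a (dstar g astar) j c"
  using assms by (cases g; cases a; cases astar) (auto simp: admissible_def dstar_def uptake_prob_def)

section \<open>The cluster-randomized trial\<close>

locale cluster_trial = prob_space M for M :: "'w measure" +
  fixes MC :: "'c measure" and MV :: "'v measure"
    and Cv :: "'w \<Rightarrow> 'c" and cN :: "'c \<Rightarrow> nat" and cV :: "'c \<Rightarrow> 'v"
    and N :: "'w \<Rightarrow> nat" and V :: "'w \<Rightarrow> 'v" and w :: "nat \<Rightarrow> 'v \<Rightarrow> real"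
    and A :: "'w \<Rightarrow> bool"
    and Dp :: "'w \<Rightarrow> bool \<Rightarrow> nat \<Rightarrow> bool"
    and Yp :: "'w \<Rightarrow> bool \<Rightarrow> nat \<Rightarrow> bool list \<Rightarrow> real"
    and D :: "'w \<Rightarrow> nat \<Rightarrow> bool" and Y :: "'w \<Rightarrow> nat \<Rightarrow> real"
    and p :: "bool \<Rightarrow> nat \<Rightarrow> 'c \<Rightarrow> real"
    and mu :: "bool \<Rightarrow> bool \<Rightarrow> nat \<Rightarrow> 'c \<Rightarrow> real"
  assumes Cv_meas: "Cv \<in> measurable M MC"
    and cN_meas[measurable]: "cN \<in> measurable MC (count_space UNIV)"
    and cV_meas[measurable]: "cV \<in> measurable MC MV"
    and N_def: "\<forall>\<omega>\<in>space M. N \<omega> = cN (Cv \<omega>)"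
    and V_def: "\<forall>\<omega>\<in>space M. V \<omega> = cV (Cv \<omega>)"
    and w_meas: "(\<lambda>(n, v). w n v) \<in> borel_measurable (count_space UNIV \<Otimes>\<^sub>M MV)"
    and W_sq: "integrable M (\<lambda>\<omega>. (w (N \<omega>) (V \<omega>))\<^sup>2)"
    and N_fin: "\<exists>Nmax. AE \<omega> in M. 1 \<le> N \<omega> \<and> N \<omega> \<le> Nmax"
    and Yp_sq: "\<forall>a' j ds. integrable M
                   (\<lambda>\<omega>. if j < N \<omega> \<and> length ds = N \<omega> then (Yp \<omega> a' j ds)\<^sup>2 else 0)"
    and D_meas: "\<forall>j. (\<lambda>\<omega>. D \<omega> j) \<in> measurable M (count_space UNIV)"
    and Y_meas: "\<forall>j. (\<lambda>\<omega>. Y \<omega> j) \<in> borel_measurable M"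
    and consistency: "AE \<omega> in M. \<forall>j < N \<omega>.
        D \<omega> j = Dp \<omega> (A \<omega>) j \<and> Y \<omega> j = Yp \<omega> (A \<omega>) j (map (D \<omega>) [0..<N \<omega>])"
    and A_pos: "\<And>a. 0 < prob {\<omega> \<in> space M. A \<omega> = a}"
    and A_indep: "indep_rv M (count_space UNIV) A
        (MC \<Otimes>\<^sub>M (\<Pi>\<^sub>M i\<in>(UNIV :: (bool \<times> nat) set). count_space (UNIV :: bool set))
            \<Otimes>\<^sub>M (\<Pi>\<^sub>M i\<in>(UNIV :: (bool \<times> nat \<times> bool list) set). (borel :: real measure)))
        (\<lambda>\<omega>. (Cv \<omega>, (\<lambda>(a', k). Dp \<omega> a' k), (\<lambda>(a', j, ds). Yp \<omega> a' j ds)))"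
    and monotonicity: "AE \<omega> in M. \<forall>j < N \<omega>. Dp \<omega> False j \<longrightarrow> Dp \<omega> True j"
    and ignorability: "\<forall>a' a'' j. cond_indep M (vimage_algebra (space M) Cv MC)
        (\<lambda>\<omega>. if j < N \<omega> then cf_outcome Dp Yp (N \<omega>) a' a'' \<omega> j else 0) borel
        (\<lambda>\<omega>. stratum_of (Dp \<omega> True j) (Dp \<omega> False j)) (count_space UNIV)"
    and p_meas: "\<forall>a' j. p a' j \<in> borel_measurable MC"
    and p_version: "\<forall>j. AE \<omega> in M. j < N \<omega> \<longrightarrow>
        p (A \<omega>) j (Cv \<omega>) =
        real_cond_exp M (vimage_algebra (space M) (\<lambda>\<omega>. (A \<omega>, Cv \<omega>)) (count_space UNIV \<Otimes>\<^sub>M MC))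
          (\<lambda>\<omega>. if j < N \<omega> \<and> D \<omega> j then 1 else 0) \<omega>"
    and mu_meas: "\<forall>a' d j. mu a' d j \<in> borel_measurable MC"
    and mu_version: "\<forall>j. AE \<omega> in M. j < N \<omega> \<longrightarrow>
        mu (A \<omega>) (D \<omega> j) j (Cv \<omega>) =
        real_cond_exp M (vimage_algebra (space M) (\<lambda>\<omega>. (A \<omega>, D \<omega> j, Cv \<omega>))
            (count_space UNIV \<Otimes>\<^sub>M count_space UNIV \<Otimes>\<^sub>M MC))
          (\<lambda>\<omega>. if j < N \<omega> then Y \<omega> j else 0) \<omega>"
begin

abbreviation "MU \<equiv> MC \<Otimes>\<^sub>M (\<Pi>\<^sub>M i\<in>(UNIV :: (bool \<times> nat) set). count_space (UNIV :: bool set))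
    \<Otimes>\<^sub>M (\<Pi>\<^sub>M i\<in>(UNIV :: (bool \<times> nat \<times> bool list) set). (borel :: real measure))"
abbreviation "U \<equiv> \<lambda>\<omega>. (Cv \<omega>, (\<lambda>(a', k). Dp \<omega> a' k), (\<lambda>(a', j, ds). Yp \<omega> a' j ds))"
abbreviation "FU \<equiv> vimage_algebra (space M) U MU"
abbreviation "FC \<equiv> vimage_algebra (space M) Cv MC"
abbreviation "FAC \<equiv> vimage_algebra (space M) (\<lambda>\<omega>. (A \<omega>, Cv \<omega>)) (count_space UNIV \<Otimes>\<^sub>M MC)"
abbreviation "FADC j \<equiv> vimage_algebra (space M) (\<lambda>\<omega>. (A \<omega>, D \<omega> j, Cv \<omega>))
    (count_space UNIV \<Otimes>\<^sub>M count_space UNIV \<Otimes>\<^sub>M MC)"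

abbreviation "G j \<omega> \<equiv> stratum_of (Dp \<omega> True j) (Dp \<omega> False j)"
abbreviation "Ycf a b j \<omega> \<equiv> if j < N \<omega> then cf_outcome Dp Yp (N \<omega>) a b \<omega> j else 0"
abbreviation "W \<omega> \<equiv> w (N \<omega>) (V \<omega>)"

lemma U_measurable: "U \<in> measurable M MU"
  using A_indep unfolding indep_rv_def by blast

lemma A_measurable[measurable]: "A \<in> measurable M (count_space UNIV)"
  using A_indep unfolding indep_rv_def by blast

lemma observed_measurable[measurable]:
  "(\<lambda>\<omega>. D \<omega> j) \<in> measurable M (count_space UNIV)" "(\<lambda>\<omega>. Y \<omega> j) \<in> borel_measurable M"
  using D_meas Y_meas by auto

lemma regression_measurable[measurable]:
  "p a j \<in> borel_measurable MC" "mu a d j \<in> borel_measurable MC"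
  using p_meas mu_meas by auto

lemma U_measurable_FU: "U \<in> measurable FU MU"
  by (rule measurable_vimage_algebra_self[OF U_measurable])

lemma measurable_potentials:
  assumes "U \<in> measurable S MU"
  shows "Cv \<in> measurable S MC"
    and "(\<lambda>\<omega>. Dp \<omega> a k) \<in> measurable S (count_space UNIV)"
    and "(\<lambda>\<omega>. Yp \<omega> a j ds) \<in> borel_measurable S"
proof -
  show "Cv \<in> measurable S MC" using measurable_compose[OF assms measurable_fst] by simp
  have "(\<lambda>\<omega>. fst (snd (U \<omega>)) (a, k)) \<in> measurable S (count_space UNIV)"
    by (intro measurable_compose[OF assms] measurable_compose[OF measurable_snd]
          measurable_compose[OF measurable_fst] measurable_component_singleton) simp
  then show "(\<lambda>\<omega>. Dp \<omega> a k) \<in> measurable S (count_space UNIV)" by simp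
  have "(\<lambda>\<omega>. snd (snd (U \<omega>)) (a, j, ds)) \<in> borel_measurable S"
    by (intro measurable_compose[OF assms] measurable_compose[OF measurable_snd]
          measurable_compose[OF measurable_snd] measurable_component_singleton) simp
  then show "(\<lambda>\<omega>. Yp \<omega> a j ds) \<in> borel_measurable S" by simp
qed

lemma measurable_N_V:
  assumes "Cv \<in> measurable S MC" and "space S = space M"
  shows "N \<in> measurable S (count_space UNIV)" and "V \<in> measurable S MV"
proof -
  have "(\<lambda>\<omega>. cN (Cv \<omega>)) \<in> measurable S (count_space UNIV)"
    using assms(1) by measurable
  then show "N \<in> measurable S (count_space UNIV)"
    by (rule measurable_cong[THEN iffD1, rotated]) (use N_def assms(2) in auto)
  have "(\<lambda>\<omega>. cV (Cv \<omega>)) \<in> measurable S MV"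
    using assms(1) by measurable
  then show "V \<in> measurable S MV"
    by (rule measurable_cong[THEN iffD1, rotated]) (use V_def assms(2) in auto)
qed

lemma Cv_measurable_FC: "Cv \<in> measurable FC MC"
  by (rule measurable_vimage_algebra_self[OF Cv_meas])

lemmas measurable_M[measurable] =
  measurable_potentials[OF U_measurable] measurable_N_V[OF Cv_meas refl]
lemmas measurable_FU[measurable] =
  measurable_potentials[OF U_measurable_FU]
  measurable_N_V[OF measurable_potentials(1)[OF U_measurable_FU]]
lemmas measurable_FC[measurable] =
  Cv_measurable_FC measurable_N_V[OF Cv_measurable_FC]

lemma measurable_FAC[measurable]:
  "A \<in> measurable FAC (count_space UNIV)" "Cv \<in> measurable FAC MC"
  "N \<in> measurable FAC (count_space UNIV)"
proof -
  have "(\<lambda>\<omega>. (A \<omega>, Cv \<omega>)) \<in> measurable FAC (count_space UNIV \<Otimes>\<^sub>M MC)"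
    by (rule measurable_vimage_algebra_self) measurable
  then show "A \<in> measurable FAC (count_space UNIV)" and Cv: "Cv \<in> measurable FAC MC"
    using measurable_compose[OF _ measurable_fst] measurable_compose[OF _ measurable_snd] by fastforce+
  show "N \<in> measurable FAC (count_space UNIV)" by (rule measurable_N_V(1)[OF Cv]) simp
qed

lemma measurable_FADC[measurable]:
  "A \<in> measurable (FADC j) (count_space UNIV)"
  "(\<lambda>\<omega>. D \<omega> j) \<in> measurable (FADC j) (count_space UNIV)"
  "Cv \<in> measurable (FADC j) MC"
proof -
  have ADC: "(\<lambda>\<omega>. (A \<omega>, D \<omega> j, Cv \<omega>))
      \<in> measurable (FADC j) (count_space UNIV \<Otimes>\<^sub>M count_space UNIV \<Otimes>\<^sub>M MC)"
    by (rule measurable_vimage_algebra_self) measurable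
  show "A \<in> measurable (FADC j) (count_space UNIV)"
    "(\<lambda>\<omega>. D \<omega> j) \<in> measurable (FADC j) (count_space UNIV)" "Cv \<in> measurable (FADC j) MC"
    using measurable_compose[OF ADC measurable_fst]
      measurable_compose[OF ADC measurable_compose[OF measurable_snd measurable_fst]]
      measurable_compose[OF ADC measurable_compose[OF measurable_snd measurable_snd]]
    by simp_all
qed

lemma sigma_finite_FC: "sigma_finite_subalgebra M FC"
  by (rule sigma_finite_subalgebra_vimage_algebra[OF Cv_meas])

lemma sigma_finite_FAC: "sigma_finite_subalgebra M FAC"
  by (rule sigma_finite_subalgebra_vimage_algebra) measurable

lemma Ycf_measurable[measurable]: "(\<lambda>\<omega>. Ycf a b j \<omega>) \<in> borel_measurable M"
  and Ycf_measurable_FU: "(\<lambda>\<omega>. Ycf a b j \<omega>) \<in> borel_measurable FU"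
proof -
  note measurable_cf_outcome[OF measurable_M(2,3,4), measurable]
    measurable_cf_outcome[OF measurable_FU(2,3,4), measurable]
  show "(\<lambda>\<omega>. Ycf a b j \<omega>) \<in> borel_measurable M" "(\<lambda>\<omega>. Ycf a b j \<omega>) \<in> borel_measurable FU"
    by measurable
qed

lemma cluster_size_bounded: obtains Nmax where "AE \<omega> in M. 1 \<le> N \<omega> \<and> N \<omega> \<le> Nmax"
  using N_fin by blast

lemma Ycf_square_integrable: "integrable M (\<lambda>\<omega>. (Ycf a b j \<omega>)\<^sup>2)"
proof -
  obtain Nmax where Nmax: "AE \<omega> in M. 1 \<le> N \<omega> \<and> N \<omega> \<le> Nmax" by (rule cluster_size_bounded)
  define Ds where "Ds = {ds :: bool list. set ds \<subseteq> UNIV \<and> length ds \<le> Nmax}"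
  have "finite Ds" unfolding Ds_def by (rule finite_lists_length_le) simp
  let ?B = "\<lambda>\<omega>. \<Sum>ds\<in>Ds. if j < N \<omega> \<and> length ds = N \<omega> then (Yp \<omega> a j ds)\<^sup>2 else 0"
  show ?thesis
  proof (rule Bochner_Integration.integrable_bound)
    show "integrable M ?B" using Yp_sq by (intro Bochner_Integration.integrable_sum) blast
    show "AE \<omega> in M. norm ((Ycf a b j \<omega>)\<^sup>2) \<le> norm (?B \<omega>)"
      using Nmax
    proof eventually_elim
      case (elim \<omega>)
      let ?ds = "map (\<lambda>k. if k = j then Dp \<omega> b k else Dp \<omega> a k) [0..<N \<omega>]"
      have "(Ycf a b j \<omega>)\<^sup>2 \<le> ?B \<omega>"
      proof (cases "j < N \<omega>")
        case True
        have "?ds \<in> Ds" using elim unfolding Ds_def by simp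
        have "(Ycf a b j \<omega>)\<^sup>2 = (if j < N \<omega> \<and> length ?ds = N \<omega> then (Yp \<omega> a j ?ds)\<^sup>2 else 0)"
          using True by (simp only: cf_outcome_def if_True length_map length_upt) simp
        also have "\<dots> \<le> ?B \<omega>"
          by (rule member_le_sum[OF \<open>?ds \<in> Ds\<close> _ \<open>finite Ds\<close>]) simp
        finally show ?thesis .
      qed (simp add: sum_nonneg)
      then show ?case by (simp add: sum_nonneg)
    qed
  qed measurable
qed

lemma Ycf_integrable: "integrable M (\<lambda>\<omega>. Ycf a b j \<omega>)"
  by (rule integrable_abs_le_mult_of_squares[OF Ycf_square_integrable, where g="\<lambda>_. 1"]) auto

lemma uptake_consistency: "AE \<omega> in M. \<forall>j < N \<omega>. D \<omega> j = Dp \<omega> (A \<omega>) j"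
  using consistency by eventually_elim auto

lemma outcome_consistency: "AE \<omega> in M. \<forall>j < N \<omega>. Y \<omega> j = Ycf (A \<omega>) (A \<omega>) j \<omega>"
  using consistency
proof eventually_elim
  case (elim \<omega>)
  have uptakes: "map (D \<omega>) [0..<N \<omega>] = map (Dp \<omega> (A \<omega>)) [0..<N \<omega>]"
    using elim by (intro map_cong) auto
  show ?case
  proof (intro allI impI)
    fix j assume "j < N \<omega>"
    then have "Y \<omega> j = Yp \<omega> (A \<omega>) j (map (D \<omega>) [0..<N \<omega>])" using elim by blast
    then show "Y \<omega> j = Ycf (A \<omega>) (A \<omega>) j \<omega>"
      using \<open>j < N \<omega>\<close> by (simp add: cf_outcome_def uptakes)
  qed
qed

lemma p_unit_interval: "AE \<omega> in M. j < N \<omega> \<longrightarrow> 0 \<le> p a j (Cv \<omega>) \<and> p a j (Cv \<omega>) \<le> 1"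
proof (rule indep_rv_AE_of_AE_on_event[OF A_indep _ A_pos])
  have "{\<omega>\<in>space FU. j < N \<omega> \<longrightarrow> 0 \<le> p a j (Cv \<omega>) \<and> p a j (Cv \<omega>) \<le> 1} \<in> sets FU"
    by measurable
  then show "{\<omega>\<in>space M. j < N \<omega> \<longrightarrow> 0 \<le> p a j (Cv \<omega>) \<and> p a j (Cv \<omega>) \<le> 1} \<in> sets FU"
    by (simp only: space_vimage_algebra)
  let ?f = "\<lambda>\<omega>. if j < N \<omega> \<and> D \<omega> j then 1 else 0 :: real"
  have "AE \<omega> in M. 0 \<le> real_cond_exp M FAC ?f \<omega> \<and> real_cond_exp M FAC ?f \<omega> \<le> 1"
    by (rule real_cond_exp_unit_interval[OF sigma_finite_FAC]) auto
  then show "AE \<omega> in M. A \<omega> = a \<longrightarrow> j < N \<omega> \<longrightarrow> 0 \<le> p a j (Cv \<omega>) \<and> p a j (Cv \<omega>) \<le> 1"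
    using p_version[rule_format, of j] by eventually_elim auto
qed

lemma sets_FC_subset: "sets FC \<subseteq> sets FU" "sets FC \<subseteq> sets FAC" "sets FC \<subseteq> sets M"
  by (rule sets_vimage_algebra_subset; simp add: measurable_FU(1) measurable_FAC(2) Cv_meas)+

lemma integral_eq_by_randomization:
  fixes f g :: "'w \<Rightarrow> real"
  assumes "f \<in> borel_measurable FU" "integrable M f" "g \<in> borel_measurable FU" "integrable M g"
    and "(\<integral>\<omega>. indicator {\<omega>\<in>space M. A \<omega> = a} \<omega> * f \<omega> \<partial>M)
       = (\<integral>\<omega>. indicator {\<omega>\<in>space M. A \<omega> = a} \<omega> * g \<omega> \<partial>M)"
  shows "(\<integral>\<omega>. f \<omega> \<partial>M) = (\<integral>\<omega>. g \<omega> \<partial>M)"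
  using assms(5) A_pos[of a]
  by (simp add: indep_rv_integral_indicator_mult[OF A_indep assms(1,2)]
      indep_rv_integral_indicator_mult[OF A_indep assms(3,4)])

section \<open>Principal scores\<close>

lemma p_cluster_integrable: "integrable M (\<lambda>\<omega>. if j < N \<omega> then p a j (Cv \<omega>) else 0)"
proof (rule integrable_const_bound)
  show "AE \<omega> in M. norm (if j < N \<omega> then p a j (Cv \<omega>) else 0) \<le> 1"
    using p_unit_interval[of j a] by eventually_elim auto
qed measurable

lemma integral_potential_uptake:
  assumes H: "H \<in> sets FC"
  shows "(\<integral>\<omega>. indicator H \<omega> * (if j < N \<omega> \<and> Dp \<omega> a j then 1 else 0) \<partial>M)
       = (\<integral>\<omega>. indicator H \<omega> * (if j < N \<omega> then p a j (Cv \<omega>) else 0) \<partial>M)"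
proof (rule integral_eq_by_randomization)
  interpret FAC: sigma_finite_subalgebra M FAC by (rule sigma_finite_FAC)
  let ?f = "\<lambda>\<omega>. if j < N \<omega> \<and> Dp \<omega> a j then 1 else 0 :: real"
  let ?g = "\<lambda>\<omega>. if j < N \<omega> then p a j (Cv \<omega>) else 0"
  let ?fD = "\<lambda>\<omega>. if j < N \<omega> \<and> D \<omega> j then 1 else 0 :: real"
  let ?arm = "indicator {\<omega>\<in>space M. A \<omega> = a} :: 'w \<Rightarrow> real"
  let ?factor = "\<lambda>\<omega>. ?arm \<omega> * indicator H \<omega> * (if j < N \<omega> then 1 else 0)"
  have [measurable]: "H \<in> sets FU" "H \<in> sets FAC" "H \<in> sets M" using H sets_FC_subset by auto
  have [measurable]: "{\<omega>\<in>space M. A \<omega> = a} \<in> sets FAC"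
  proof -
    have "{\<omega>\<in>space FAC. A \<omega> = a} \<in> sets FAC" by measurable
    then show ?thesis by simp
  qed
  show "(\<lambda>\<omega>. indicator H \<omega> * ?f \<omega>) \<in> borel_measurable FU"
    "(\<lambda>\<omega>. indicator H \<omega> * ?g \<omega>) \<in> borel_measurable FU" by measurable
  show "integrable M (\<lambda>\<omega>. indicator H \<omega> * ?f \<omega>)"
    by (rule integrable_const_bound[where B=1]) (auto simp: indicator_def)
  show "integrable M (\<lambda>\<omega>. indicator H \<omega> * ?g \<omega>)"
    using integrable_mult_indicator[OF \<open>H \<in> sets M\<close> p_cluster_integrable] by simp
  have "AE \<omega> in M. ?arm \<omega> * (indicator H \<omega> * ?f \<omega>) = ?factor \<omega> * ?fD \<omega>"
    using uptake_consistency
  proof eventually_elim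
    case (elim \<omega>)
    then show ?case by (cases "A \<omega> = a") (auto simp: indicator_def)
  qed
  then have "(\<integral>\<omega>. ?arm \<omega> * (indicator H \<omega> * ?f \<omega>) \<partial>M) = (\<integral>\<omega>. ?factor \<omega> * ?fD \<omega> \<partial>M)"
    by (rule integral_cong_AE[rotated 2]) measurable
  also have "\<dots> = (\<integral>\<omega>. ?factor \<omega> * real_cond_exp M FAC ?fD \<omega> \<partial>M)"
  proof (rule FAC.real_cond_exp_intg(2)[symmetric])
    show "integrable M (\<lambda>\<omega>. ?factor \<omega> * ?fD \<omega>)"
      by (rule integrable_const_bound[where B=1]) (auto simp: indicator_def)
  qed measurable
  also have "\<dots> = (\<integral>\<omega>. ?arm \<omega> * (indicator H \<omega> * ?g \<omega>) \<partial>M)"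
  proof (rule integral_cong_AE[rotated 2])
    show "AE \<omega> in M. ?factor \<omega> * real_cond_exp M FAC ?fD \<omega> = ?arm \<omega> * (indicator H \<omega> * ?g \<omega>)"
      using p_version[rule_format, of j]
    proof eventually_elim
      case (elim \<omega>)
      then show ?case by (cases "A \<omega> = a") (auto simp: indicator_def)
    qed
  qed measurable
  finally show "(\<integral>\<omega>. ?arm \<omega> * (indicator H \<omega> * ?f \<omega>) \<partial>M) = (\<integral>\<omega>. ?arm \<omega> * (indicator H \<omega> * ?g \<omega>) \<partial>M)" .
qed

lemma real_cond_exp_uptake:
  "AE \<omega> in M. real_cond_exp M FC (\<lambda>\<omega>. if j < N \<omega> \<and> Dp \<omega> a j then 1 else 0) \<omega>
             = (if j < N \<omega> then p a j (Cv \<omega>) else 0)"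
proof -
  interpret FC: sigma_finite_subalgebra M FC by (rule sigma_finite_FC)
  show ?thesis
  proof (rule FC.real_cond_exp_charact)
    show "integrable M (\<lambda>\<omega>. if j < N \<omega> \<and> Dp \<omega> a j then 1 else 0 :: real)"
      by (rule integrable_const_bound[where B=1]) auto
  qed (use integral_potential_uptake p_cluster_integrable
       in \<open>auto simp: set_lebesgue_integral_def mult.commute\<close>)
qed

lemma real_cond_exp_in_cluster:
  "AE \<omega> in M. real_cond_exp M FC (\<lambda>\<omega>. if j < N \<omega> then 1 else 0) \<omega> = (if j < N \<omega> then 1 else 0)"
proof -
  interpret FC: sigma_finite_subalgebra M FC by (rule sigma_finite_FC)
  show ?thesis
    by (rule FC.real_cond_exp_F_meas) (auto intro!: integrable_const_bound[where B=1])
qed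

lemma real_cond_exp_stratum:
  "AE \<omega> in M. real_cond_exp M FC (\<lambda>\<omega>. if j < N \<omega> \<and> G j \<omega> = g then 1 else 0) \<omega>
             = (if j < N \<omega> then escore p g j (Cv \<omega>) else 0)"
proof -
  interpret FC: sigma_finite_subalgebra M FC by (rule sigma_finite_FC)
  let ?f = "\<lambda>a \<omega>. if j < N \<omega> \<and> Dp \<omega> a j then 1 else 0 :: real"
  let ?fI = "\<lambda>\<omega>. if j < N \<omega> then 1 else 0 :: real"
  let ?comb = "case g of At \<Rightarrow> ?f False | Co \<Rightarrow> (\<lambda>\<omega>. ?f True \<omega> - ?f False \<omega>)
                 | Nt \<Rightarrow> (\<lambda>\<omega>. ?fI \<omega> - ?f True \<omega>) | De \<Rightarrow> (\<lambda>_. 0)"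
  have integrable: "integrable M (?f a)" "integrable M ?fI" for a
    by (auto intro!: integrable_const_bound[where B=1])
  have "AE \<omega> in M. (if j < N \<omega> \<and> G j \<omega> = g then 1 else 0) = ?comb \<omega>"
    using monotonicity
  proof eventually_elim
    case (elim \<omega>)
    then show ?case by (cases g) (auto simp: stratum_of_def)
  qed
  then have "AE \<omega> in M. real_cond_exp M FC (\<lambda>\<omega>. if j < N \<omega> \<and> G j \<omega> = g then 1 else 0) \<omega>
                      = real_cond_exp M FC ?comb \<omega>"
    by (rule FC.real_cond_exp_cong) (measurable, cases g, simp_all)
  moreover have "AE \<omega> in M. real_cond_exp M FC ?comb \<omega> = (if j < N \<omega> then escore p g j (Cv \<omega>) else 0)"
    using real_cond_exp_uptake[of j True] real_cond_exp_uptake[of j False] real_cond_exp_in_cluster[of j]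
      FC.real_cond_exp_diff[OF integrable(1)[of True] integrable(1)[of False]]
      FC.real_cond_exp_diff[OF integrable(2) integrable(1)[of True]]
      FC.real_cond_exp_F_meas[OF integrable_zero borel_measurable_const]
    by eventually_elim (cases g; simp add: escore_def)
  ultimately show ?thesis by eventually_elim simp
qed

theorem principal_score_identification:
  "AE \<omega> in M. \<forall>j < N \<omega>.
     real_cond_exp M FC (\<lambda>\<omega>. if j < N \<omega> \<and> G j \<omega> = g then 1 else 0) \<omega> = escore p g j (Cv \<omega>)"
proof -
  have "AE \<omega> in M. \<forall>j. real_cond_exp M FC (\<lambda>\<omega>. if j < N \<omega> \<and> G j \<omega> = g then 1 else 0) \<omega>
                         = (if j < N \<omega> then escore p g j (Cv \<omega>) else 0)"
    unfolding AE_all_countable by (intro allI real_cond_exp_stratum)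
  then show ?thesis by eventually_elim auto
qed

section \<open>Outcome regressions\<close>

lemma observed_outcome_integrable: "integrable M (\<lambda>\<omega>. if j < N \<omega> then Y \<omega> j else 0)"
proof -
  have integrable: "integrable M (\<lambda>\<omega>. if A \<omega> then Ycf True True j \<omega> else Ycf False False j \<omega>)"
  proof (rule Bochner_Integration.integrable_bound)
    show "integrable M (\<lambda>\<omega>. \<bar>Ycf True True j \<omega>\<bar> + \<bar>Ycf False False j \<omega>\<bar>)"
      using Ycf_integrable by simp
  qed auto
  have consistent: "AE \<omega> in M. (if A \<omega> then Ycf True True j \<omega> else Ycf False False j \<omega>)
                          = (if j < N \<omega> then Y \<omega> j else 0)"
    using outcome_consistency by eventually_elim auto
  show ?thesis by (rule integrable_cong_AE_imp[OF integrable _ consistent]) measurable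
qed

lemma integral_outcome_on_uptake:
  assumes H: "H \<in> sets FC" and bounded: "\<And>\<omega>. \<omega> \<in> H \<Longrightarrow> j < N \<omega> \<and> \<bar>mu a d j (Cv \<omega>)\<bar> \<le> B"
  shows "(\<integral>\<omega>. indicator H \<omega> * (Ycf a a j \<omega> * (if Dp \<omega> a j = d then 1 else 0)) \<partial>M)
       = (\<integral>\<omega>. indicator H \<omega> * ((if Dp \<omega> a j = d then 1 else 0) * mu a d j (Cv \<omega>)) \<partial>M)"
proof (rule integral_eq_by_randomization)
  interpret FADC: sigma_finite_subalgebra M "FADC j"
    by (rule sigma_finite_subalgebra_vimage_algebra) measurable
  let ?z = "\<lambda>\<omega>. if Dp \<omega> a j = d then 1 else 0 :: real"
  let ?Yobs = "\<lambda>\<omega>. if j < N \<omega> then Y \<omega> j else 0"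
  let ?arm = "indicator {\<omega>\<in>space M. A \<omega> = a} :: 'w \<Rightarrow> real"
  let ?factor = "\<lambda>\<omega>. ?arm \<omega> * indicator H \<omega> * (if D \<omega> j = d then 1 else 0)"
  have H_FADC: "H \<in> sets (FADC j)"
    using H by (rule subsetD[OF sets_vimage_algebra_subset[OF measurable_FADC(3)], rotated]) simp
  have [measurable]: "H \<in> sets FU" "H \<in> sets M" using H sets_FC_subset by auto
  have arm_FADC: "{\<omega>\<in>space M. A \<omega> = a} \<in> sets (FADC j)"
  proof -
    have "{\<omega>\<in>space (FADC j). A \<omega> = a} \<in> sets (FADC j)" by measurable
    then show ?thesis by simp
  qed
  have factor_FADC: "?factor \<in> borel_measurable (FADC j)"
    using H_FADC arm_FADC by measurable
  have muH_bounded: "\<bar>indicator H \<omega> * mu a d j (Cv \<omega>)\<bar> \<le> \<bar>B\<bar>" for \<omega>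
    using bounded[of \<omega>] by (auto simp: indicator_def)
  show "(\<lambda>\<omega>. indicator H \<omega> * (Ycf a a j \<omega> * ?z \<omega>)) \<in> borel_measurable FU"
    "(\<lambda>\<omega>. indicator H \<omega> * (?z \<omega> * mu a d j (Cv \<omega>))) \<in> borel_measurable FU"
    using Ycf_measurable_FU by measurable
  show "integrable M (\<lambda>\<omega>. indicator H \<omega> * (Ycf a a j \<omega> * ?z \<omega>))"
    by (rule Bochner_Integration.integrable_bound[OF Ycf_integrable]) (auto simp: indicator_def)
  show "integrable M (\<lambda>\<omega>. indicator H \<omega> * (?z \<omega> * mu a d j (Cv \<omega>)))"
    by (rule integrable_const_bound[where B="\<bar>B\<bar>"]) (use muH_bounded in \<open>auto simp: abs_mult\<close>)
  have "AE \<omega> in M. ?arm \<omega> * (indicator H \<omega> * (Ycf a a j \<omega> * ?z \<omega>)) = ?factor \<omega> * ?Yobs \<omega>"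
    using uptake_consistency outcome_consistency
  proof eventually_elim
    case (elim \<omega>)
    then show ?case using bounded[of \<omega>] by (cases "A \<omega> = a") (auto simp: indicator_def)
  qed
  then have "(\<integral>\<omega>. ?arm \<omega> * (indicator H \<omega> * (Ycf a a j \<omega> * ?z \<omega>)) \<partial>M) = (\<integral>\<omega>. ?factor \<omega> * ?Yobs \<omega> \<partial>M)"
    by (rule integral_cong_AE[rotated 2]) measurable
  also have "\<dots> = (\<integral>\<omega>. ?factor \<omega> * real_cond_exp M (FADC j) ?Yobs \<omega> \<partial>M)"
  proof (rule FADC.real_cond_exp_intg(2)[symmetric, OF _ factor_FADC])
    show "integrable M (\<lambda>\<omega>. ?factor \<omega> * ?Yobs \<omega>)"
      by (rule Bochner_Integration.integrable_bound[OF observed_outcome_integrable])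
         (auto simp: indicator_def)
  qed measurable
  also have "\<dots> = (\<integral>\<omega>. ?arm \<omega> * (indicator H \<omega> * (?z \<omega> * mu a d j (Cv \<omega>))) \<partial>M)"
  proof (rule integral_cong_AE[rotated 2])
    show "AE \<omega> in M. ?factor \<omega> * real_cond_exp M (FADC j) ?Yobs \<omega>
                   = ?arm \<omega> * (indicator H \<omega> * (?z \<omega> * mu a d j (Cv \<omega>)))"
      using uptake_consistency mu_version[rule_format, of j]
    proof eventually_elim
      case (elim \<omega>)
      then show ?case using bounded[of \<omega>] by (cases "A \<omega> = a") (auto simp: indicator_def)
    qed
  qed (use factor_FADC in measurable)
  finally show "(\<integral>\<omega>. ?arm \<omega> * (indicator H \<omega> * (Ycf a a j \<omega> * ?z \<omega>)) \<partial>M)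
      = (\<integral>\<omega>. ?arm \<omega> * (indicator H \<omega> * (?z \<omega> * mu a d j (Cv \<omega>))) \<partial>M)" .
qed

lemma real_cond_exp_restrict_cluster:
  assumes "f \<in> borel_measurable M" "integrable M f"
  shows "AE \<omega> in M. j < N \<omega> \<longrightarrow>
           real_cond_exp M FC f \<omega> = real_cond_exp M FC (\<lambda>\<omega>. if j < N \<omega> then f \<omega> else 0) \<omega>"
proof -
  interpret FC: sigma_finite_subalgebra M FC by (rule sigma_finite_FC)
  let ?I = "\<lambda>\<omega>. if j < N \<omega> then 1 else 0 :: real"
  have "AE \<omega> in M. real_cond_exp M FC (\<lambda>\<omega>. ?I \<omega> * f \<omega>) \<omega> = ?I \<omega> * real_cond_exp M FC f \<omega>"
    by (rule FC.real_cond_exp_mult)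
       (use assms in \<open>auto intro: Bochner_Integration.integrable_bound[OF assms(2)]\<close>)
  moreover have "(\<lambda>\<omega>. ?I \<omega> * f \<omega>) = (\<lambda>\<omega>. if j < N \<omega> then f \<omega> else 0)" by auto
  ultimately show ?thesis by (auto elim!: AE_mp)
qed

lemma real_cond_exp_outcome_stratum_mult:
  "AE \<omega> in M. real_cond_exp M FC (\<lambda>\<omega>. Ycf a b j \<omega> * (if G j \<omega> \<in> S then 1 else 0)) \<omega>
             = real_cond_exp M FC (Ycf a b j) \<omega> * real_cond_exp M FC (\<lambda>\<omega>. if G j \<omega> \<in> S then 1 else 0) \<omega>"
  by (rule cond_indep_real_cond_exp_mult[OF sigma_finite_FC])
     (use ignorability Ycf_integrable in auto)

lemma real_cond_exp_outcome_uptake_mult: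
  "AE \<omega> in M. real_cond_exp M FC (\<lambda>\<omega>. Ycf a b j \<omega> * (if Dp \<omega> c j = d then 1 else 0)) \<omega>
             = real_cond_exp M FC (Ycf a b j) \<omega> * real_cond_exp M FC (\<lambda>\<omega>. if Dp \<omega> c j = d then 1 else 0) \<omega>"
  using real_cond_exp_outcome_stratum_mult[where S="{s. stratum_uptake c s = d}"] by (cases c) simp_all

lemma real_cond_exp_stratum_unrestricted:
  "AE \<omega> in M. j < N \<omega> \<longrightarrow> real_cond_exp M FC (\<lambda>\<omega>. if G j \<omega> = g then 1 else 0) \<omega> = escore p g j (Cv \<omega>)"
proof -
  have "AE \<omega> in M. j < N \<omega> \<longrightarrow> real_cond_exp M FC (\<lambda>\<omega>. if G j \<omega> = g then 1 else 0) \<omega>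
          = real_cond_exp M FC (\<lambda>\<omega>. if j < N \<omega> then if G j \<omega> = g then 1 else 0 else 0) \<omega>"
    by (rule real_cond_exp_restrict_cluster) (auto intro!: integrable_const_bound[where B=1])
  moreover have "(\<lambda>\<omega>. if j < N \<omega> then if G j \<omega> = g then 1 else 0 else 0)
               = (\<lambda>\<omega>. if j < N \<omega> \<and> G j \<omega> = g then 1 else 0 :: real)" by auto
  ultimately show ?thesis
    using real_cond_exp_stratum[of j g] by (auto elim!: AE_mp)
qed

lemma real_cond_exp_uptake_prob:
  "AE \<omega> in M. j < N \<omega> \<longrightarrow>
     real_cond_exp M FC (\<lambda>\<omega>. if Dp \<omega> a j = d then 1 else 0) \<omega> = uptake_prob p a d j (Cv \<omega>)"
proof -
  interpret FC: sigma_finite_subalgebra M FC by (rule sigma_finite_FC)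
  let ?f = "\<lambda>\<omega>. if j < N \<omega> \<and> Dp \<omega> a j then 1 else 0 :: real"
  let ?fI = "\<lambda>\<omega>. if j < N \<omega> then 1 else 0 :: real"
  have "AE \<omega> in M. j < N \<omega> \<longrightarrow> real_cond_exp M FC (\<lambda>\<omega>. if Dp \<omega> a j = d then 1 else 0) \<omega>
          = real_cond_exp M FC (\<lambda>\<omega>. if j < N \<omega> then if Dp \<omega> a j = d then 1 else 0 else 0) \<omega>"
    by (rule real_cond_exp_restrict_cluster) (auto intro!: integrable_const_bound[where B=1])
  moreover have "(\<lambda>\<omega>. if j < N \<omega> then if Dp \<omega> a j = d then 1 else 0 else 0)
               = (if d then ?f else (\<lambda>\<omega>. ?fI \<omega> - ?f \<omega>))"
    by (cases d) auto
  moreover have "AE \<omega> in M. real_cond_exp M FC (\<lambda>\<omega>. ?fI \<omega> - ?f \<omega>) \<omega>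
                          = real_cond_exp M FC ?fI \<omega> - real_cond_exp M FC ?f \<omega>"
    by (rule FC.real_cond_exp_diff) (auto intro!: integrable_const_bound[where B=1])
  ultimately show ?thesis
    using real_cond_exp_uptake[of j a] real_cond_exp_in_cluster[of j]
    by (cases d) (auto elim!: AE_mp simp: uptake_prob_def)
qed

lemma integral_real_cond_exp_outcome_uptake:
  assumes H: "H \<in> sets FC" and bounded: "\<And>\<omega>. \<omega> \<in> H \<Longrightarrow> j < N \<omega> \<and> \<bar>mu a d j (Cv \<omega>)\<bar> \<le> B"
  defines "z \<equiv> \<lambda>\<omega>. if Dp \<omega> a j = d then 1 else 0 :: real"
  shows "(\<integral>\<omega>. indicator H \<omega> * (real_cond_exp M FC (Ycf a a j) \<omega> * real_cond_exp M FC z \<omega>) \<partial>M)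
       = (\<integral>\<omega>. indicator H \<omega> * (mu a d j (Cv \<omega>) * real_cond_exp M FC z \<omega>) \<partial>M)"
proof -
  interpret FC: sigma_finite_subalgebra M FC by (rule sigma_finite_FC)
  have [measurable]: "H \<in> sets FC" "H \<in> sets M" using H sets_FC_subset by auto
  have [measurable]: "z \<in> borel_measurable M" unfolding z_def by measurable
  have "(\<integral>\<omega>. indicator H \<omega> * (real_cond_exp M FC (Ycf a a j) \<omega> * real_cond_exp M FC z \<omega>) \<partial>M)
      = (\<integral>\<omega>. indicator H \<omega> * real_cond_exp M FC (\<lambda>\<omega>. Ycf a a j \<omega> * z \<omega>) \<omega> \<partial>M)"
    using real_cond_exp_outcome_uptake_mult[of j a a a d]
    by (intro integral_cong_AE) (auto simp: z_def elim!: AE_mp)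
  also have "\<dots> = (\<integral>\<omega>. indicator H \<omega> * (Ycf a a j \<omega> * z \<omega>) \<partial>M)"
  proof (rule FC.real_cond_exp_intg(2))
    show "integrable M (\<lambda>\<omega>. indicator H \<omega> * (Ycf a a j \<omega> * z \<omega>))"
      by (rule Bochner_Integration.integrable_bound[OF Ycf_integrable])
         (measurable, auto simp: indicator_def z_def)
  qed auto
  also have "\<dots> = (\<integral>\<omega>. indicator H \<omega> * mu a d j (Cv \<omega>) * z \<omega> \<partial>M)"
    using integral_outcome_on_uptake[OF H bounded] by (simp add: z_def mult_ac)
  also have "\<dots> = (\<integral>\<omega>. indicator H \<omega> * mu a d j (Cv \<omega>) * real_cond_exp M FC z \<omega> \<partial>M)"
  proof (rule FC.real_cond_exp_intg(2)[symmetric])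
    show "integrable M (\<lambda>\<omega>. indicator H \<omega> * mu a d j (Cv \<omega>) * z \<omega>)"
      by (rule integrable_const_bound[where B="\<bar>B\<bar>"])
         (use bounded in \<open>force simp: indicator_def z_def\<close>)+
  qed auto
  finally show ?thesis by (simp add: mult_ac)
qed

(* The regression mu need not be integrable, so the identity is first shown where |mu| <= B. *)
lemma real_cond_exp_outcome_uptake_bounded:
  fixes a d :: bool and j :: nat and B :: real
  defines "z \<equiv> \<lambda>\<omega>. if Dp \<omega> a j = d then 1 else 0 :: real"
  shows "AE \<omega> in M. j < N \<omega> \<and> \<bar>mu a d j (Cv \<omega>)\<bar> \<le> B \<longrightarrow>
           real_cond_exp M FC (Ycf a a j) \<omega> * real_cond_exp M FC z \<omega>
             = mu a d j (Cv \<omega>) * real_cond_exp M FC z \<omega>"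
proof -
  interpret FC: sigma_finite_subalgebra M FC by (rule sigma_finite_FC)
  define K where "K = {\<omega>\<in>space M. j < N \<omega> \<and> \<bar>mu a d j (Cv \<omega>)\<bar> \<le> B}"
  let ?cX = "real_cond_exp M FC (Ycf a a j)" and ?q = "real_cond_exp M FC z"
  have [measurable]: "K \<in> sets FC"
  proof -
    have "{\<omega>\<in>space FC. j < N \<omega> \<and> \<bar>mu a d j (Cv \<omega>)\<bar> \<le> B} \<in> sets FC" by measurable
    then show ?thesis by (simp add: K_def)
  qed
  have [measurable]: "K \<in> sets M" using sets_FC_subset by auto
  have q: "AE \<omega> in M. 0 \<le> ?q \<omega> \<and> ?q \<omega> \<le> 1"
    by (rule real_cond_exp_unit_interval[OF sigma_finite_FC]) (auto simp: z_def)
  have "AE \<omega> in M. indicator K \<omega> * (?cX \<omega> * ?q \<omega>) = indicator K \<omega> * (mu a d j (Cv \<omega>) * ?q \<omega>)"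
  proof (rule FC.AE_eq_of_set_integrals_eq)
    show "integrable M (\<lambda>\<omega>. indicator K \<omega> * (?cX \<omega> * ?q \<omega>))"
    proof (rule Bochner_Integration.integrable_bound[OF FC.real_cond_exp_int(1)[OF Ycf_integrable]])
      show "AE \<omega> in M. norm (indicator K \<omega> * (?cX \<omega> * ?q \<omega>)) \<le> norm (?cX \<omega>)"
        using q by eventually_elim (auto simp: indicator_def abs_mult intro!: mult_right_le_one_le)
    qed measurable
    show "integrable M (\<lambda>\<omega>. indicator K \<omega> * (mu a d j (Cv \<omega>) * ?q \<omega>))"
    proof (rule integrable_const_bound[where B="\<bar>B\<bar>"])
      show "AE \<omega> in M. norm (indicator K \<omega> * (mu a d j (Cv \<omega>) * ?q \<omega>)) \<le> \<bar>B\<bar>"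
        using q
      proof eventually_elim
        case (elim \<omega>)
        then show ?case using mult_mono[of "\<bar>mu a d j (Cv \<omega>)\<bar>" "\<bar>B\<bar>" "?q \<omega>" 1]
          by (auto simp: indicator_def abs_mult K_def)
      qed
    qed measurable
    fix H assume "H \<in> sets FC"
    then have HK: "H \<inter> K \<in> sets FC" by simp
    have bounded: "j < N \<omega> \<and> \<bar>mu a d j (Cv \<omega>)\<bar> \<le> B" if "\<omega> \<in> H \<inter> K" for \<omega>
      using that by (simp add: K_def)
    have indicator_HK: "indicator H \<omega> * (indicator K \<omega> * x) = indicator (H \<inter> K) \<omega> * x"
      for \<omega> and x :: real
      by (simp add: indicator_inter_arith)
    show "(\<integral>\<omega>. indicator H \<omega> * (indicator K \<omega> * (?cX \<omega> * ?q \<omega>)) \<partial>M)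
        = (\<integral>\<omega>. indicator H \<omega> * (indicator K \<omega> * (mu a d j (Cv \<omega>) * ?q \<omega>)) \<partial>M)"
      unfolding indicator_HK z_def by (rule integral_real_cond_exp_outcome_uptake[OF HK bounded])
  qed measurable
  then show ?thesis using AE_space by eventually_elim (auto simp: K_def)
qed

lemma real_cond_exp_outcome_eq_regression:
  assumes pos: "AE \<omega> in M. j < N \<omega> \<longrightarrow> 0 < uptake_prob p a d j (Cv \<omega>)"
  shows "AE \<omega> in M. j < N \<omega> \<longrightarrow> real_cond_exp M FC (Ycf a a j) \<omega> = mu a d j (Cv \<omega>)"
proof -
  have "AE \<omega> in M. \<forall>n::nat. j < N \<omega> \<and> \<bar>mu a d j (Cv \<omega>)\<bar> \<le> real n \<longrightarrow>
          real_cond_exp M FC (Ycf a a j) \<omega> * real_cond_exp M FC (\<lambda>\<omega>. if Dp \<omega> a j = d then 1 else 0) \<omega>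
          = mu a d j (Cv \<omega>) * real_cond_exp M FC (\<lambda>\<omega>. if Dp \<omega> a j = d then 1 else 0) \<omega>"
    unfolding AE_all_countable by (intro allI real_cond_exp_outcome_uptake_bounded)
  then show ?thesis
    using real_cond_exp_uptake_prob[of j a d] pos
  proof eventually_elim
    case (elim \<omega>)
    show ?case
    proof
      assume "j < N \<omega>"
      then show "real_cond_exp M FC (Ycf a a j) \<omega> = mu a d j (Cv \<omega>)"
        using elim(1)[rule_format, of "nat \<lceil>\<bar>mu a d j (Cv \<omega>)\<bar>\<rceil>"] elim(2,3)
        by (auto intro: real_nat_ceiling_ge)
    qed
  qed
qed

lemma real_cond_exp_cross_world_outcome:
  assumes "AE \<omega> in M. j < N \<omega> \<longrightarrow> p True j (Cv \<omega>) < 1"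
  shows "AE \<omega> in M. j < N \<omega> \<longrightarrow>
           real_cond_exp M FC (Ycf True False j) \<omega> = real_cond_exp M FC (Ycf True True j) \<omega>"
proof -
  have never_taker: "Ycf True False j \<omega> * (if G j \<omega> \<in> {Nt} then 1 else 0)
                   = Ycf True True j \<omega> * (if G j \<omega> \<in> {Nt} then 1 else 0)" for \<omega>
  proof (cases "G j \<omega> = Nt")
    case True
    then have uptakes: "map (\<lambda>k. if k = j then Dp \<omega> False k else Dp \<omega> True k) [0..<N \<omega>]
             = map (\<lambda>k. if k = j then Dp \<omega> True k else Dp \<omega> True k) [0..<N \<omega>]"
      by (intro map_cong) (auto simp: stratum_of_def split: if_splits)
    show ?thesis unfolding cf_outcome_def uptakes by (rule refl)
  qed simp
  \<comment> \<open>Both sides factor through the never-taker score 1 - p(1, j, C) > 0, which cancels.\<close>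
  show ?thesis
    using real_cond_exp_outcome_stratum_mult[where a=True and b=False and j=j and S="{Nt}"]
      real_cond_exp_outcome_stratum_mult[where a=True and b=True and j=j and S="{Nt}"]
      real_cond_exp_stratum_unrestricted[of j Nt] assms
    unfolding never_taker by eventually_elim (auto simp: escore_def)
qed

lemma real_cond_exp_cf_outcome_eq_regression:
  assumes "astar \<longrightarrow> a"
    and pos: "AE \<omega> in M. j < N \<omega> \<longrightarrow> 0 < uptake_prob p a d j (Cv \<omega>)"
    and never_taker_pos: "a \<noteq> astar \<Longrightarrow> AE \<omega> in M. j < N \<omega> \<longrightarrow> p True j (Cv \<omega>) < 1"
  shows "AE \<omega> in M. j < N \<omega> \<longrightarrow> real_cond_exp M FC (Ycf a astar j) \<omega> = mu a d j (Cv \<omega>)"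
proof (cases "astar = a")
  case True
  show ?thesis using real_cond_exp_outcome_eq_regression[OF pos] unfolding True .
next
  case False
  with assms(1) have a: "a = True" and astar: "astar = False" by auto
  show ?thesis
    using real_cond_exp_cross_world_outcome[OF never_taker_pos[OF not_sym[OF False]]]
      real_cond_exp_outcome_eq_regression[OF pos]
    unfolding a astar by eventually_elim auto
qed

lemma real_cond_exp_stratum_cf_outcome:
  assumes "astar \<longrightarrow> a"
    and "AE \<omega> in M. j < N \<omega> \<longrightarrow> 0 < uptake_prob p a d j (Cv \<omega>)"
    and "a \<noteq> astar \<Longrightarrow> AE \<omega> in M. j < N \<omega> \<longrightarrow> p True j (Cv \<omega>) < 1"
  shows "AE \<omega> in M. j < N \<omega> \<longrightarrow>
           real_cond_exp M FC (\<lambda>\<omega>. Ycf a astar j \<omega> * (if G j \<omega> = g then 1 else 0)) \<omega>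
             = escore p g j (Cv \<omega>) * mu a d j (Cv \<omega>)"
proof -
  have "AE \<omega> in M. j < N \<omega> \<longrightarrow> real_cond_exp M FC (Ycf a astar j) \<omega> = mu a d j (Cv \<omega>)"
    by (rule real_cond_exp_cf_outcome_eq_regression) (use assms in auto)
  then show ?thesis
    using real_cond_exp_outcome_stratum_mult[where a=a and b=astar and j=j and S="{g}"]
      real_cond_exp_stratum_unrestricted[of j g]
    by eventually_elim auto
qed

section \<open>Weighted principal stratum means\<close>

lemma W_measurable[measurable]:
  "(\<lambda>\<omega>. W \<omega>) \<in> borel_measurable M" "(\<lambda>\<omega>. W \<omega>) \<in> borel_measurable FC"
  using measurable_compose[OF measurable_Pair[OF measurable_M(4,5)] w_meas]
    measurable_compose[OF measurable_Pair[OF measurable_FC(2,3)] w_meas] by simp_all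

lemma W_integrable: "integrable M (\<lambda>\<omega>. W \<omega>)"
  by (rule integrable_abs_le_mult_of_squares[OF W_sq, where g="\<lambda>_. 1"]) auto

lemma integral_weighted_cluster_sum_cong:
  fixes F H :: "nat \<Rightarrow> 'w \<Rightarrow> real"
  assumes F: "\<And>j. F j \<in> borel_measurable M" "\<And>j. integrable M (\<lambda>\<omega>. W \<omega> * F j \<omega>)"
    and H: "\<And>j. H j \<in> borel_measurable M"
    and cond_exp: "\<And>j. AE \<omega> in M. j < N \<omega> \<longrightarrow> real_cond_exp M FC (F j) \<omega> = H j \<omega>"
  shows "(\<integral>\<omega>. W \<omega> / real (N \<omega>) * (\<Sum>j<N \<omega>. F j \<omega>) \<partial>M)
       = (\<integral>\<omega>. W \<omega> / real (N \<omega>) * (\<Sum>j<N \<omega>. H j \<omega>) \<partial>M)"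
proof -
  interpret FC: sigma_finite_subalgebra M FC by (rule sigma_finite_FC)
  obtain Nmax where Nmax: "AE \<omega> in M. 1 \<le> N \<omega> \<and> N \<omega> \<le> Nmax" by (rule cluster_size_bounded)
  define \<phi> where "\<phi> j \<omega> = (if j < N \<omega> then W \<omega> / real (N \<omega>) else 0)" for j \<omega>
  note F[measurable] H[measurable]
  have \<phi>_FC[measurable]: "\<phi> j \<in> borel_measurable FC" for j unfolding \<phi>_def by measurable
  have [measurable]: "\<phi> j \<in> borel_measurable M" for j unfolding \<phi>_def by measurable
  have as_sum: "AE \<omega> in M. W \<omega> / real (N \<omega>) * (\<Sum>j<N \<omega>. K j \<omega>) = (\<Sum>j<Nmax. \<phi> j \<omega> * K j \<omega>)"
    for K :: "nat \<Rightarrow> 'w \<Rightarrow> real"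
    using Nmax
  proof eventually_elim
    case (elim \<omega>)
    have "(\<Sum>j<Nmax. \<phi> j \<omega> * K j \<omega>) = (\<Sum>j<Nmax. if j < N \<omega> then W \<omega> / real (N \<omega>) * K j \<omega> else 0)"
      by (intro sum.cong) (auto simp: \<phi>_def)
    also have "\<dots> = (\<Sum>j\<in>{j\<in>{..<Nmax}. j < N \<omega>}. W \<omega> / real (N \<omega>) * K j \<omega>)"
      by (rule sum.inter_filter[symmetric]) simp
    also have "{j\<in>{..<Nmax}. j < N \<omega>} = {..<N \<omega>}" using elim by auto
    finally show ?case by (simp add: sum_distrib_left)
  qed
  have \<phi>F: "integrable M (\<lambda>\<omega>. \<phi> j \<omega> * F j \<omega>)" for j
  proof (rule Bochner_Integration.integrable_bound[OF F(2)[of j]])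
    show "AE \<omega> in M. norm (\<phi> j \<omega> * F j \<omega>) \<le> norm (W \<omega> * F j \<omega>)"
      using Nmax
    proof eventually_elim
      case (elim \<omega>)
      have "\<bar>\<phi> j \<omega>\<bar> \<le> \<bar>W \<omega>\<bar>"
        using elim mult_left_mono[of 1 "real (N \<omega>)" "\<bar>W \<omega>\<bar>"]
        by (auto simp: \<phi>_def abs_divide divide_le_eq)
      then show ?case by (simp add: abs_mult mult_right_mono)
    qed
  qed measurable
  have \<phi>H: "integrable M (\<lambda>\<omega>. \<phi> j \<omega> * H j \<omega>)"
    and integral_\<phi>H: "(\<integral>\<omega>. \<phi> j \<omega> * F j \<omega> \<partial>M) = (\<integral>\<omega>. \<phi> j \<omega> * H j \<omega> \<partial>M)" for j
  proof -
    have ae: "AE \<omega> in M. \<phi> j \<omega> * real_cond_exp M FC (F j) \<omega> = \<phi> j \<omega> * H j \<omega>"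
      using cond_exp[of j] by eventually_elim (auto simp: \<phi>_def)
    note cond_exp_integral = FC.real_cond_exp_intg[OF \<phi>F \<phi>_FC F(1)]
    show "integrable M (\<lambda>\<omega>. \<phi> j \<omega> * H j \<omega>)"
      by (rule integrable_cong_AE_imp[OF cond_exp_integral(1) _ ae]) measurable
    have "(\<integral>\<omega>. \<phi> j \<omega> * real_cond_exp M FC (F j) \<omega> \<partial>M) = (\<integral>\<omega>. \<phi> j \<omega> * H j \<omega> \<partial>M)"
      by (rule integral_cong_AE[OF _ _ ae]) measurable
    then show "(\<integral>\<omega>. \<phi> j \<omega> * F j \<omega> \<partial>M) = (\<integral>\<omega>. \<phi> j \<omega> * H j \<omega> \<partial>M)"
      using cond_exp_integral(2) by simp
  qed
  have "(\<integral>\<omega>. W \<omega> / real (N \<omega>) * (\<Sum>j<N \<omega>. F j \<omega>) \<partial>M) = (\<integral>\<omega>. (\<Sum>j<Nmax. \<phi> j \<omega> * F j \<omega>) \<partial>M)"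
    by (rule integral_cong_AE[OF _ _ as_sum]) measurable
  also have "\<dots> = (\<Sum>j<Nmax. \<integral>\<omega>. \<phi> j \<omega> * F j \<omega> \<partial>M)"
    by (rule Bochner_Integration.integral_sum[OF \<phi>F])
  also have "\<dots> = (\<Sum>j<Nmax. \<integral>\<omega>. \<phi> j \<omega> * H j \<omega> \<partial>M)"
    by (simp add: integral_\<phi>H)
  also have "\<dots> = (\<integral>\<omega>. (\<Sum>j<Nmax. \<phi> j \<omega> * H j \<omega>) \<partial>M)"
    by (rule Bochner_Integration.integral_sum[OF \<phi>H, symmetric])
  also have "\<dots> = (\<integral>\<omega>. W \<omega> / real (N \<omega>) * (\<Sum>j<N \<omega>. H j \<omega>) \<partial>M)"
    by (rule integral_cong_AE[OF _ _ as_sum, symmetric]) measurable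
  finally show ?thesis .
qed

theorem weighted_principal_stratum_mean:
  assumes "astar \<longrightarrow> a"
    and pos: "AE \<omega> in M. \<forall>j < N \<omega>. 0 < uptake_prob p a d j (Cv \<omega>)"
    and never_taker_pos: "a \<noteq> astar \<Longrightarrow> AE \<omega> in M. \<forall>j < N \<omega>. p True j (Cv \<omega>) < 1"
  shows "(\<integral>\<omega>. W \<omega> / real (N \<omega>) *
            (\<Sum>j<N \<omega>. (if G j \<omega> = g then 1 else 0) * cf_outcome Dp Yp (N \<omega>) a astar \<omega> j) \<partial>M)
         / (\<integral>\<omega>. W \<omega> / real (N \<omega>) * (\<Sum>j<N \<omega>. if G j \<omega> = g then 1 else 0) \<partial>M)
       = (\<integral>\<omega>. W \<omega> / real (N \<omega>) * (\<Sum>j<N \<omega>. escore p g j (Cv \<omega>) * mu a d j (Cv \<omega>)) \<partial>M)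
         / (\<integral>\<omega>. W \<omega> / real (N \<omega>) * (\<Sum>j<N \<omega>. escore p g j (Cv \<omega>)) \<partial>M)"
proof -
  have [measurable]: "(\<lambda>\<omega>. if G j \<omega> = g then 1 else 0 :: real) \<in> borel_measurable M" for j
    by measurable
  have [measurable]: "(\<lambda>\<omega>. escore p g j (Cv \<omega>)) \<in> borel_measurable M" for j
    by (cases g) (simp_all add: escore_def)
  have numerator:
    "(\<integral>\<omega>. W \<omega> / real (N \<omega>) *
        (\<Sum>j<N \<omega>. (if G j \<omega> = g then 1 else 0) * cf_outcome Dp Yp (N \<omega>) a astar \<omega> j) \<partial>M)
     = (\<integral>\<omega>. W \<omega> / real (N \<omega>) * (\<Sum>j<N \<omega>. Ycf a astar j \<omega> * (if G j \<omega> = g then 1 else 0)) \<partial>M)"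
    by (rule Bochner_Integration.integral_cong[OF refl]) (auto intro!: sum.cong)
  also have "\<dots> = (\<integral>\<omega>. W \<omega> / real (N \<omega>) * (\<Sum>j<N \<omega>. escore p g j (Cv \<omega>) * mu a d j (Cv \<omega>)) \<partial>M)"
  proof (rule integral_weighted_cluster_sum_cong)
    show "integrable M (\<lambda>\<omega>. W \<omega> * (Ycf a astar j \<omega> * (if G j \<omega> = g then 1 else 0)))" for j
      by (rule integrable_abs_le_mult_of_squares[OF W_sq Ycf_square_integrable])
         (auto simp: abs_mult)
    show "AE \<omega> in M. j < N \<omega> \<longrightarrow>
            real_cond_exp M FC (\<lambda>\<omega>. Ycf a astar j \<omega> * (if G j \<omega> = g then 1 else 0)) \<omega>
              = escore p g j (Cv \<omega>) * mu a d j (Cv \<omega>)" for j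
      by (rule real_cond_exp_stratum_cf_outcome)
         (use assms in \<open>auto elim!: AE_mp\<close>)
  qed measurable
  moreover have "(\<integral>\<omega>. W \<omega> / real (N \<omega>) * (\<Sum>j<N \<omega>. if G j \<omega> = g then 1 else 0) \<partial>M)
               = (\<integral>\<omega>. W \<omega> / real (N \<omega>) * (\<Sum>j<N \<omega>. escore p g j (Cv \<omega>)) \<partial>M)"
  proof (rule integral_weighted_cluster_sum_cong)
    show "integrable M (\<lambda>\<omega>. W \<omega> * (if G j \<omega> = g then 1 else 0))" for j
      by (rule Bochner_Integration.integrable_bound[OF W_integrable])
         auto
  qed (use real_cond_exp_stratum_unrestricted in measurable)
  ultimately show ?thesis by simp
qed

end

theorem theorem1:
  fixes M :: "'w measure" and MC :: "'c measure" and MV :: "'v measure"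
    and Cv :: "'w \<Rightarrow> 'c" and cN :: "'c \<Rightarrow> nat" and cV :: "'c \<Rightarrow> 'v"
    and N :: "'w \<Rightarrow> nat" and V :: "'w \<Rightarrow> 'v" and w :: "nat \<Rightarrow> 'v \<Rightarrow> real"
    and A :: "'w \<Rightarrow> bool" and \<pi> :: real
    and Dp :: "'w \<Rightarrow> bool \<Rightarrow> nat \<Rightarrow> bool"
    and Yp :: "'w \<Rightarrow> bool \<Rightarrow> nat \<Rightarrow> bool list \<Rightarrow> real"
    and D :: "'w \<Rightarrow> nat \<Rightarrow> bool" and Y :: "'w \<Rightarrow> nat \<Rightarrow> real"
    and strong :: bool
    and p :: "bool \<Rightarrow> nat \<Rightarrow> 'c \<Rightarrow> real"
    and mu :: "bool \<Rightarrow> bool \<Rightarrow> nat \<Rightarrow> 'c \<Rightarrow> real"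
    and g :: stratum and a astar :: bool
  assumes prob: "prob_space M"
    \<comment> \<open>covariates C = (X, V, N); N and V are functions of C, W = w(N, V)\<close>
    and Cv_meas: "Cv \<in> measurable M MC"
    and cN_meas: "cN \<in> measurable MC (count_space UNIV)"
    and cV_meas: "cV \<in> measurable MC MV"
    and N_def: "\<forall>\<omega>\<in>space M. N \<omega> = cN (Cv \<omega>)"
    and V_def: "\<forall>\<omega>\<in>space M. V \<omega> = cV (Cv \<omega>)"
    and w_meas: "(\<lambda>(n, v). w n v) \<in> borel_measurable (count_space UNIV \<Otimes>\<^sub>M MV)"
    and W_sq: "integrable M (\<lambda>\<omega>. (w (N \<omega>) (V \<omega>))\<^sup>2)"
    \<comment> \<open>super population: N has finite support in the positive integers\<close>
    and N_fin: "\<exists>Nmax. AE \<omega> in M. 1 \<le> N \<omega> \<and> N \<omega> \<le> Nmax"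
    \<comment> \<open>finite second moments of the potential outcomes\<close>
    and Yp_meas: "\<forall>a' j ds. (\<lambda>\<omega>. Yp \<omega> a' j ds) \<in> borel_measurable M"
    and Yp_sq: "\<forall>a' j ds. integrable M
                   (\<lambda>\<omega>. if j < N \<omega> \<and> length ds = N \<omega> then (Yp \<omega> a' j ds)\<^sup>2 else 0)"
    \<comment> \<open>observed variables\<close>
    and A_meas: "A \<in> measurable M (count_space UNIV)"
    and D_meas: "\<forall>j. (\<lambda>\<omega>. D \<omega> j) \<in> measurable M (count_space UNIV)"
    and Y_meas: "\<forall>j. (\<lambda>\<omega>. Y \<omega> j) \<in> borel_measurable M"
    \<comment> \<open>consistency\<close>
    and consistency: "AE \<omega> in M. \<forall>j < N \<omega>.
        D \<omega> j = Dp \<omega> (A \<omega>) j \<and> Y \<omega> j = Yp \<omega> (A \<omega>) j (map (D \<omega>) [0..<N \<omega>])"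
    \<comment> \<open>cluster randomization: A ~ Bernoulli(pi), independent of covariates and potential variables\<close>
    and pi_bounds: "0 < \<pi>" "\<pi> < 1"
    and A_bern: "measure M {\<omega> \<in> space M. A \<omega>} = \<pi>"
    and A_indep: "indep_rv M (count_space UNIV) A
        (MC \<Otimes>\<^sub>M (\<Pi>\<^sub>M i\<in>(UNIV :: (bool \<times> nat) set). count_space (UNIV :: bool set))
            \<Otimes>\<^sub>M (\<Pi>\<^sub>M i\<in>(UNIV :: (bool \<times> nat \<times> bool list) set). (borel :: real measure)))
        (\<lambda>\<omega>. (Cv \<omega>, (\<lambda>(a', k). Dp \<omega> a' k), (\<lambda>(a', j, ds). Yp \<omega> a' j ds)))"
    \<comment> \<open>monotonicity: standard (strong = False) or strong (strong = True)\<close>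
    and monotonicity: "AE \<omega> in M. \<forall>j < N \<omega>.
        (Dp \<omega> False j \<longrightarrow> Dp \<omega> True j) \<and> (strong \<longrightarrow> \<not> Dp \<omega> False j)"
    \<comment> \<open>extended principal ignorability\<close>
    and ignorability: "\<forall>a' a'' j. cond_indep M (vimage_algebra (space M) Cv MC)
        (\<lambda>\<omega>. if j < N \<omega> then cf_outcome Dp Yp (N \<omega>) a' a'' \<omega> j else 0) borel
        (\<lambda>\<omega>. stratum_of (Dp \<omega> True j) (Dp \<omega> False j)) (count_space UNIV)"
    \<comment> \<open>p a j C is a version of P(D_j = 1 | A = a, C)\<close>
    and p_meas: "\<forall>a' j. p a' j \<in> borel_measurable MC"
    and p_version: "\<forall>j. AE \<omega> in M. j < N \<omega> \<longrightarrow>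
        p (A \<omega>) j (Cv \<omega>) =
        real_cond_exp M (vimage_algebra (space M) (\<lambda>\<omega>. (A \<omega>, Cv \<omega>)) (count_space UNIV \<Otimes>\<^sub>M MC))
          (\<lambda>\<omega>. if j < N \<omega> \<and> D \<omega> j then 1 else 0) \<omega>"
    \<comment> \<open>mu a d j C is a version of E[Y_j | A = a, D_j = d, C]\<close>
    and mu_meas: "\<forall>a' d j. mu a' d j \<in> borel_measurable MC"
    and mu_version: "\<forall>j. AE \<omega> in M. j < N \<omega> \<longrightarrow>
        mu (A \<omega>) (D \<omega> j) j (Cv \<omega>) =
        real_cond_exp M (vimage_algebra (space M) (\<lambda>\<omega>. (A \<omega>, D \<omega> j, Cv \<omega>))
            (count_space UNIV \<Otimes>\<^sub>M count_space UNIV \<Otimes>\<^sub>M MC))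
          (\<lambda>\<omega>. if j < N \<omega> then Y \<omega> j else 0) \<omega>"
    \<comment> \<open>positivity\<close>
    and positivity: "AE \<omega> in M. \<forall>j < N \<omega>.
        0 < p True j (Cv \<omega>) \<and> p True j (Cv \<omega>) < 1 \<and> p False j (Cv \<omega>) < 1 \<and>
        (\<not> strong \<longrightarrow> 0 < p False j (Cv \<omega>))"
    \<comment> \<open>the estimand theta_g(a, a*) is defined\<close>
    and adm: "admissible strong g a astar"
  shows "(AE \<omega> in M. \<forall>j < N \<omega>.
            real_cond_exp M (vimage_algebra (space M) Cv MC)
              (\<lambda>\<omega>. if j < N \<omega> \<and> stratum_of (Dp \<omega> True j) (Dp \<omega> False j) = g then 1 else 0) \<omega>
            = escore p g j (Cv \<omega>))
       \<and> (\<integral>\<omega>. w (N \<omega>) (V \<omega>) / real (N \<omega>) *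
              (\<Sum>j<N \<omega>. (if stratum_of (Dp \<omega> True j) (Dp \<omega> False j) = g then 1 else 0)
                          * cf_outcome Dp Yp (N \<omega>) a astar \<omega> j) \<partial>M)
         / (\<integral>\<omega>. w (N \<omega>) (V \<omega>) / real (N \<omega>) *
              (\<Sum>j<N \<omega>. if stratum_of (Dp \<omega> True j) (Dp \<omega> False j) = g then 1 else 0) \<partial>M)
       = (\<integral>\<omega>. w (N \<omega>) (V \<omega>) / real (N \<omega>) *
              (\<Sum>j<N \<omega>. escore p g j (Cv \<omega>) * mu a (dstar g astar) j (Cv \<omega>)) \<partial>M)
         / (\<integral>\<omega>. w (N \<omega>) (V \<omega>) / real (N \<omega>) *
              (\<Sum>j<N \<omega>. escore p g j (Cv \<omega>)) \<partial>M)"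
proof -
  interpret prob_space M by (rule prob)
  interpret cluster_trial M MC MV Cv cN cV N V w A Dp Yp D Y p mu
  proof unfold_locales
    show "0 < prob {\<omega>\<in>space M. A \<omega> = a}" for a
      by (rule prob_eq_pos_of_bernoulli[OF A_meas A_bern pi_bounds])
    show "AE \<omega> in M. \<forall>j < N \<omega>. Dp \<omega> False j \<longrightarrow> Dp \<omega> True j"
      using monotonicity by eventually_elim auto
  qed (fact assms)+
  have "astar \<longrightarrow> a" using adm by (auto simp: admissible_def split: if_splits)
  moreover have "AE \<omega> in M. \<forall>j < N \<omega>. 0 < uptake_prob p a (dstar g astar) j (Cv \<omega>)"
    using positivity by eventually_elim (auto intro: admissible_uptake_prob_pos[OF adm])
  moreover have "AE \<omega> in M. \<forall>j < N \<omega>. p True j (Cv \<omega>) < 1"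
    using positivity by eventually_elim auto
  ultimately show ?thesis
    using principal_score_identification weighted_principal_stratum_mean by blast
qed

end
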